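(* Let $f \in \mathcal{C}_{2\pi}$, let $A_n[f]$ be the Toeplitz matrix generated by $f$ and $c_n[f]$ the optimal circulant preconditioner for $A_n[f]$. Assume that $\sin c_n[f]$ is invertible for every $n$ and that there is a constant $C$ with $\|(\sin c_n[f])^{-1}\|_2\le C$ for all $n$. Then for every $\epsilon>0$ there exist positive integers $N$ and $M$ such that for every $n>N$ there are matrices $\widehat{\mathcal R}_n[f],\widehat{\mathcal E}_n[f]\in\mathbb{C}^{n\times n}$ with \[ (\sin c_n[f])^{-1}\sin A_n[f] = I_n+\widehat{\mathcal R}_n[f]+\widehat{\mathcal E}_n[f],\qquad \operatorname{rank}\widehat{\mathcal R}_n[f]\le 2M,\qquad \|\widehat{\mathcal E}_n[f]\|_2\le\epsilon. \]
   Context: $\mathcal{C}_{2\pi}$ denotes the Banach space of all $2\pi$-periodic continuous complex-valued functions on $\mathbb{R}$ with the supremum norm $\|\cdot\|_\infty$. For $f\in\mathcal{C}_{2\pi}$ its Fourier coefficients are $a_k=\frac{1}{2\pi}\int_{-\pi}^{\pi} f(\theta)e^{-\mathbf{i}k\theta}\,d\theta$, $k\in\mathbb{Z}$. The Toeplitz matrix generated by $f$ is the $n\times n$ matrix $A_n[f]$ whose $(j,k)$ entry is $a_{j-k}$. The optimal circulant preconditioner $c_n[f]$ is the $n\times n$ circulant matrix whose $(j,k)$ entry is $c_{(j-k)\bmod n}$, where $c_k=\frac{(n-k)a_k+k\,a_{k-n}}{n}$ for $0\le k<n$. For a square matrix $X$, $\sin X=\sum_{m\ge0}\frac{(-1)^m}{(2m+1)!}X^{2m+1}$.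 $I_n$ is the $n\times n$ identity and $\|\cdot\|_2$ is the spectral norm. *)

theory Defs
  imports "HOL-Analysis.Analysis" "Jordan_Normal_Form.DL_Rank"
begin

definition fourier_coeff :: "(real \<Rightarrow> complex) \<Rightarrow> int \<Rightarrow> complex" where
  "fourier_coeff f k = (1 / (2 * of_real pi)) *
     integral {-pi..pi} (\<lambda>\<theta>. f \<theta> * exp (- \<i> * of_int k * of_real \<theta>))"

definition toeplitz_mat :: "(real \<Rightarrow> complex) \<Rightarrow> nat \<Rightarrow> complex mat" where
  "toeplitz_mat f n = mat n n (\<lambda>(j, k). fourier_coeff f (int j - int k))"

definition opt_circ_coeff :: "(real \<Rightarrow> complex) \<Rightarrow> nat \<Rightarrow> int \<Rightarrow> complex" where
  "opt_circ_coeff f n k = ((of_int (int n - k)) * fourier_coeff f k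
                           + of_int k * fourier_coeff f (k - int n)) / of_nat n"

definition opt_circ :: "(real \<Rightarrow> complex) \<Rightarrow> nat \<Rightarrow> complex mat" where
  "opt_circ f n = mat n n (\<lambda>(j, k). opt_circ_coeff f n ((int j - int k) mod int n))"

definition mat_sin :: "complex mat \<Rightarrow> complex mat" where
  "mat_sin X = mat (dim_row X) (dim_col X)
     (\<lambda>(i, j). \<Sum>m. ((-1) ^ m / of_nat (fact (2 * m + 1))) * ((X ^\<^sub>m (2 * m + 1)) $$ (i, j)))"

text \<open>The (two-sided) inverse of a square matrix (meaningful when it is invertible).\<close>
definition mat_inv :: "complex mat \<Rightarrow> complex mat" where
  "mat_inv A = (SOME B. B \<in> carrier_mat (dim_row A) (dim_row A) \<and> A * B = 1\<^sub>m (dim_row A)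
                       \<and> B * A = 1\<^sub>m (dim_row A))"

definition cvec_norm :: "complex vec \<Rightarrow> real" where
  "cvec_norm v = sqrt (\<Sum>i<dim_vec v. (cmod (v $ i))\<^sup>2)"

definition spec_norm :: "complex mat \<Rightarrow> real" where
  "spec_norm A = Sup {cvec_norm (A *\<^sub>v v) | v. v \<in> carrier_vec (dim_col A) \<and> cvec_norm v \<le> 1}"

definition cmat_rank :: "complex mat \<Rightarrow> nat" where
  "cmat_rank A = vec_space.rank (dim_row A) (A :: complex mat)"

end

theory Submission
  imports Defs
begin

text \<open>Approximate \<open>f\<close> uniformly by a trigonometric polynomial \<open>p\<close> of degree \<open>M\<close>. Since
  \<open>\<parallel>A\<^sub>n[g]\<parallel> \<le> \<parallel>g\<parallel>\<^sub>\<infinity>\<close> and \<open>c\<^sub>n[g]\<close> is an average of cyclic conjugates of \<open>A\<^sub>n[g]\<close>, replacing \<open>f\<close> by \<open>p\<close>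
  changes \<open>A\<^sub>n[f] - c\<^sub>n[f]\<close> only by a small matrix. For \<open>p\<close> itself the difference has entries \<open>O(1/n)\<close> inside
  the band \<open>|j - k| \<le> M\<close> and vanishes outside it except in the first and last \<open>M\<close> columns. Hence
  \<open>A\<^sub>n[f] = c\<^sub>n[f] + L + S\<close> with \<open>rank L \<le> 2M\<close> and \<open>S\<close> small for large \<open>n\<close>. Both matrices have norm at
  most \<open>\<parallel>f\<parallel>\<^sub>\<infinity>\<close>, so in the power series of the sine each power \<open>A\<^sup>k - c\<^sup>k\<close> splits into a part of rank
  \<open>\<le> 2kM\<close> and a part of norm \<open>\<le> k \<parallel>f\<parallel>\<^sub>\<infinity>\<^sup>k\<^sup>-\<^sup>1 \<parallel>S\<parallel>\<close>, while the tail of the series is uniformly small.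
  Multiplying by the uniformly bounded \<open>(sin c\<^sub>n[f])\<^sup>-\<^sup>1\<close> yields the claim.\<close>

no_notation Finite_Cartesian_Product.vec.vec_nth (infixl \<open>$\<close> 90) \<comment> \<open>\<open>$\<close> is vector indexing of \<open>Matrix\<close>\<close>

section \<open>Euclidean norm and operator norm bounds\<close>

lemma index_mult_mat_vec_sum:
  "A \<in> carrier_mat n m \<Longrightarrow> v \<in> carrier_vec m \<Longrightarrow> i < n \<Longrightarrow>
   (A *\<^sub>v v) $ i = (\<Sum>j<m. A $$ (i,j) * v $ j)"
  by (auto simp: scalar_prod_def row_def lessThan_atLeast0 intro!: sum.cong)

lemma mult_mat_vec_smult:
  "v \<in> carrier_vec (dim_col A) \<Longrightarrow> (A :: complex mat) *\<^sub>v (c \<cdot>\<^sub>v v) = c \<cdot>\<^sub>v (A *\<^sub>v v)"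
  by (rule eq_vecI) auto

lemma mult_mat_vec_zero [simp]: "A *\<^sub>v 0\<^sub>v (dim_col A) = 0\<^sub>v (dim_row A)"
  by (rule eq_vecI) (auto simp: scalar_prod_def)

lemma cvec_norm_L2_set: "cvec_norm v = L2_set (\<lambda>i. cmod (v $ i)) {..<dim_vec v}"
  by (simp add: cvec_norm_def L2_set_def)

lemma cvec_norm_power2: "(cvec_norm v)\<^sup>2 = (\<Sum>i<dim_vec v. (cmod (v $ i))\<^sup>2)"
  unfolding cvec_norm_def by (simp add: sum_nonneg)

lemma cvec_norm_nonneg [simp]: "0 \<le> cvec_norm v"
  unfolding cvec_norm_L2_set by (rule L2_set_nonneg)

lemma cvec_norm_zero_vec [simp]: "cvec_norm (0\<^sub>v n) = 0"
  by (simp add: cvec_norm_def)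

lemma norm_index_le_cvec_norm: "i < dim_vec v \<Longrightarrow> cmod (v $ i) \<le> cvec_norm v"
  unfolding cvec_norm_L2_set by (rule member_le_L2_set) auto

lemma cvec_norm_le_sum: "cvec_norm v \<le> (\<Sum>i<dim_vec v. cmod (v $ i))"
  unfolding cvec_norm_L2_set by (rule L2_set_le_sum) auto

lemma cvec_norm_eq_0D: "v \<in> carrier_vec n \<Longrightarrow> cvec_norm v = 0 \<Longrightarrow> v = 0\<^sub>v n"
  using norm_index_le_cvec_norm[of _ v] by (intro eq_vecI) auto

lemma cvec_norm_smult: "cvec_norm (c \<cdot>\<^sub>v v) = cmod c * cvec_norm v"
proof -
  have "cvec_norm (c \<cdot>\<^sub>v v) = L2_set (\<lambda>i. cmod c * cmod (v $ i)) {..<dim_vec v}"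
    unfolding cvec_norm_L2_set by (auto simp: norm_mult intro!: L2_set_cong)
  also have "\<dots> = cmod c * cvec_norm v"
    unfolding cvec_norm_L2_set by (simp add: L2_set_right_distrib)
  finally show ?thesis .
qed

lemma cvec_norm_triangle:
  assumes "dim_vec v = dim_vec w"
  shows "cvec_norm (v + w) \<le> cvec_norm v + cvec_norm w"
proof -
  have "cvec_norm (v + w) \<le> L2_set (\<lambda>i. cmod (v $ i) + cmod (w $ i)) {..<dim_vec v}"
    unfolding cvec_norm_L2_set using assms by (auto intro!: L2_set_mono norm_triangle_ineq)
  also have "\<dots> \<le> cvec_norm v + cvec_norm w"
    unfolding cvec_norm_L2_set using assms by (simp add: L2_set_triangle_ineq)
  finally show ?thesis .
qed

lemma cvec_norm_unit_vec: "j < m \<Longrightarrow> cvec_norm (unit_vec m j) = 1"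
proof -
  assume j: "j < m"
  have "(\<Sum>i<m. (cmod (unit_vec m j $ i))\<^sup>2) = (\<Sum>i<m. if i = j then 1 else 0)"
    using j by (intro sum.cong) auto
  then show ?thesis using j by (simp add: cvec_norm_def)
qed

lemma norm_sum_cnj_mult_le:
  assumes "dim_vec x = n" "dim_vec y = n"
  shows "cmod (\<Sum>j<n. cnj (x $ j) * y $ j) \<le> cvec_norm x * cvec_norm y"
proof -
  have "cmod (\<Sum>j<n. cnj (x $ j) * y $ j) \<le> (\<Sum>j<n. \<bar>cmod (x $ j)\<bar> * \<bar>cmod (y $ j)\<bar>)"
    by (rule order_trans[OF norm_sum]) (simp add: norm_mult)
  also have "\<dots> \<le> L2_set (\<lambda>j. cmod (x $ j)) {..<n} * L2_set (\<lambda>j. cmod (y $ j)) {..<n}"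
    by (rule L2_set_mult_ineq)
  finally show ?thesis unfolding cvec_norm_L2_set assms .
qed

lemma sum_cnj_mult_self: "dim_vec w = n \<Longrightarrow> (\<Sum>j<n. cnj (w $ j) * w $ j) = of_real ((cvec_norm w)\<^sup>2)"
proof -
  assume "dim_vec w = n"
  moreover have "cnj z * z = of_real ((cmod z)\<^sup>2)" for z
    by (metis complex_norm_square mult.commute)
  ultimately show ?thesis by (simp add: cvec_norm_power2)
qed

text \<open>A bound on the operator 2-norm, stated pointwise so that the norm calculus needs no supremum
  bookkeeping; it is linked to \<open>spec_norm\<close> by \<open>spec_norm_le\<close> and \<open>op_norm_le_spec_norm\<close>.\<close>

definition op_norm_le :: "complex mat \<Rightarrow> real \<Rightarrow> bool" where
  "op_norm_le A b \<longleftrightarrow> (\<forall>v \<in> carrier_vec (dim_col A). cvec_norm (A *\<^sub>v v) \<le> b * cvec_norm v)"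

lemma op_norm_leI:
  "(\<And>v. v \<in> carrier_vec (dim_col A) \<Longrightarrow> cvec_norm (A *\<^sub>v v) \<le> b * cvec_norm v) \<Longrightarrow> op_norm_le A b"
  by (simp add: op_norm_le_def)

lemma op_norm_leD:
  "op_norm_le A b \<Longrightarrow> v \<in> carrier_vec (dim_col A) \<Longrightarrow> cvec_norm (A *\<^sub>v v) \<le> b * cvec_norm v"
  by (simp add: op_norm_le_def)

lemma op_norm_le_mono: "op_norm_le A a \<Longrightarrow> a \<le> b \<Longrightarrow> op_norm_le A b"
  unfolding op_norm_le_def by (meson cvec_norm_nonneg mult_right_mono order_trans)

lemma op_norm_le_sum_norm_entries:
  assumes A: "A \<in> carrier_mat n m"
  shows "op_norm_le A (\<Sum>i<n. \<Sum>j<m. cmod (A $$ (i,j)))"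
proof (rule op_norm_leI)
  fix v :: "complex vec" assume "v \<in> carrier_vec (dim_col A)"
  hence v: "v \<in> carrier_vec m" using A by auto
  have "cvec_norm (A *\<^sub>v v) \<le> (\<Sum>i<n. cmod ((A *\<^sub>v v) $ i))"
    using cvec_norm_le_sum[of "A *\<^sub>v v"] A by auto
  also have "\<dots> \<le> (\<Sum>i<n. \<Sum>j<m. cmod (A $$ (i,j)) * cvec_norm v)"
  proof (rule sum_mono)
    fix i assume "i \<in> {..<n}"
    then have "cmod ((A *\<^sub>v v) $ i) \<le> (\<Sum>j<m. cmod (A $$ (i,j) * v $ j))"
      using index_mult_mat_vec_sum[OF A v] by (simp add: norm_sum)
    also have "\<dots> \<le> (\<Sum>j<m. cmod (A $$ (i,j)) * cvec_norm v)"
      using v by (auto simp: norm_mult intro!: sum_mono mult_left_mono norm_index_le_cvec_norm)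
    finally show "cmod ((A *\<^sub>v v) $ i) \<le> (\<Sum>j<m. cmod (A $$ (i,j)) * cvec_norm v)" .
  qed
  also have "\<dots> = (\<Sum>i<n. \<Sum>j<m. cmod (A $$ (i,j))) * cvec_norm v"
    by (simp add: sum_distrib_right)
  finally show "cvec_norm (A *\<^sub>v v) \<le> (\<Sum>i<n. \<Sum>j<m. cmod (A $$ (i,j))) * cvec_norm v" .
qed

lemma bdd_above_spec_norm_set:
  "bdd_above {cvec_norm (A *\<^sub>v v) | v. v \<in> carrier_vec (dim_col A) \<and> cvec_norm v \<le> 1}"
proof -
  define b where "b = (\<Sum>i<dim_row A. \<Sum>j<dim_col A. cmod (A $$ (i,j)))"
  have "op_norm_le A b" unfolding b_def by (rule op_norm_le_sum_norm_entries) auto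
  moreover have "0 \<le> b" unfolding b_def by (auto intro!: sum_nonneg)
  ultimately show ?thesis
    by (intro bdd_aboveI[of _ b]) (auto dest!: op_norm_leD intro: order_trans mult_left_le)
qed

lemma spec_norm_le: assumes "op_norm_le A b" "0 \<le> b" shows "spec_norm A \<le> b"
  unfolding spec_norm_def
proof (rule cSup_least)
  have "cvec_norm (A *\<^sub>v 0\<^sub>v (dim_col A))
      \<in> {cvec_norm (A *\<^sub>v v) | v. v \<in> carrier_vec (dim_col A) \<and> cvec_norm v \<le> 1}"
    by (rule CollectI, rule exI[of _ "0\<^sub>v (dim_col A)"]) auto
  then show "{cvec_norm (A *\<^sub>v v) | v. v \<in> carrier_vec (dim_col A) \<and> cvec_norm v \<le> 1} \<noteq> {}"
    by blast
qed (use op_norm_leD[OF assms(1)] assms(2) in \<open>auto intro: order_trans mult_left_le\<close>)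

lemma spec_norm_nonneg: "0 \<le> spec_norm A"
proof -
  have "cvec_norm (A *\<^sub>v 0\<^sub>v (dim_col A)) \<le> spec_norm A" unfolding spec_norm_def
    by (rule cSup_upper[OF _ bdd_above_spec_norm_set], rule CollectI,
        rule exI[of _ "0\<^sub>v (dim_col A)"]) auto
  then show ?thesis by simp
qed

lemma op_norm_le_spec_norm: "op_norm_le A (spec_norm A)"
proof (rule op_norm_leI)
  fix v :: "complex vec" assume v: "v \<in> carrier_vec (dim_col A)"
  show "cvec_norm (A *\<^sub>v v) \<le> spec_norm A * cvec_norm v"
  proof (cases "cvec_norm v = 0")
    case True
    then have "v = 0\<^sub>v (dim_col A)" using v by (rule cvec_norm_eq_0D[rotated])
    then show ?thesis by simp
  next
    case False
    then have pos: "cvec_norm v > 0" using cvec_norm_nonneg[of v] by linarith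
    define u where "u = (1 / complex_of_real (cvec_norm v)) \<cdot>\<^sub>v v"
    have "cvec_norm u = 1" using pos by (simp add: u_def cvec_norm_smult norm_divide)
    then have "cvec_norm (A *\<^sub>v u) \<le> spec_norm A" unfolding spec_norm_def
      by (intro cSup_upper[OF _ bdd_above_spec_norm_set]) (use v in \<open>auto simp: u_def\<close>)
    moreover have "cvec_norm (A *\<^sub>v u) = cvec_norm (A *\<^sub>v v) / cvec_norm v"
      unfolding u_def mult_mat_vec_smult[OF v] cvec_norm_smult using pos by (simp add: norm_divide)
    ultimately show ?thesis using pos by (simp add: pos_divide_le_eq)
  qed
qed

lemma op_norm_le_add:
  assumes "A \<in> carrier_mat n m" "B \<in> carrier_mat n m" "op_norm_le A a" "op_norm_le B b"
  shows "op_norm_le (A + B) (a + b)"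
proof (rule op_norm_leI)
  fix v :: "complex vec" assume "v \<in> carrier_vec (dim_col (A + B))"
  hence v: "v \<in> carrier_vec m" using assms by auto
  have "(A + B) *\<^sub>v v = A *\<^sub>v v + B *\<^sub>v v" by (rule add_mult_distrib_mat_vec[OF assms(1,2) v])
  then have "cvec_norm ((A + B) *\<^sub>v v) \<le> cvec_norm (A *\<^sub>v v) + cvec_norm (B *\<^sub>v v)"
    using cvec_norm_triangle[of "A *\<^sub>v v" "B *\<^sub>v v"] assms by auto
  also have "\<dots> \<le> a * cvec_norm v + b * cvec_norm v"
    using op_norm_leD[OF assms(3)] op_norm_leD[OF assms(4)] assms v by (auto intro: add_mono)
  finally show "cvec_norm ((A + B) *\<^sub>v v) \<le> (a + b) * cvec_norm v" by (simp add: algebra_simps)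
qed

lemma op_norm_le_mult:
  assumes "A \<in> carrier_mat n m" "B \<in> carrier_mat m k" "op_norm_le A a" "op_norm_le B b" "0 \<le> a"
  shows "op_norm_le (A * B) (a * b)"
proof (rule op_norm_leI)
  fix v :: "complex vec" assume "v \<in> carrier_vec (dim_col (A * B))"
  hence v: "v \<in> carrier_vec k" using assms(2) by simp
  have Bv: "B *\<^sub>v v \<in> carrier_vec (dim_col A)" using assms(1,2) unfolding carrier_vec_def by simp
  have "cvec_norm (A *\<^sub>v (B *\<^sub>v v)) \<le> a * cvec_norm (B *\<^sub>v v)"
    by (rule op_norm_leD[OF assms(3) Bv])
  also have "\<dots> \<le> a * (b * cvec_norm v)"
    by (rule mult_left_mono[OF op_norm_leD[OF assms(4)] assms(5)]) (use v assms(2) in simp)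
  finally show "cvec_norm ((A * B) *\<^sub>v v) \<le> (a * b) * cvec_norm v"
    by (simp add: assoc_mult_mat_vec[OF assms(1,2) v] mult.assoc)
qed

lemma op_norm_le_smult:
  assumes "op_norm_le A a"
  shows "op_norm_le (c \<cdot>\<^sub>m A) (cmod c * a)"
proof (rule op_norm_leI)
  fix v :: "complex vec" assume v: "v \<in> carrier_vec (dim_col (c \<cdot>\<^sub>m A))"
  have "(c \<cdot>\<^sub>m A) *\<^sub>v v = c \<cdot>\<^sub>v (A *\<^sub>v v)"
    using v by (intro eq_vecI) (auto simp: scalar_prod_def sum_distrib_left mult.assoc)
  then show "cvec_norm ((c \<cdot>\<^sub>m A) *\<^sub>v v) \<le> cmod c * a * cvec_norm v"
    using op_norm_leD[OF assms, of v] v by (auto simp: cvec_norm_smult mult.assoc intro: mult_left_mono)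
qed

lemma op_norm_le_diff:
  assumes "A \<in> carrier_mat n m" "B \<in> carrier_mat n m" "op_norm_le A a" "op_norm_le B b"
  shows "op_norm_le (A - B) (a + b)"
proof -
  have "A - B = A + (-1) \<cdot>\<^sub>m B" using assms(1,2) by (intro eq_matI) auto
  then show ?thesis
    using op_norm_le_add[OF assms(1) _ assms(3) op_norm_le_smult[OF assms(4), of "-1"]] assms(2)
    by simp
qed

lemma op_norm_le_one_mat: "op_norm_le (1\<^sub>m n) 1"
  by (rule op_norm_leI) simp

lemma op_norm_le_zero_mat: "op_norm_le (0\<^sub>m n m) 0"
proof (rule op_norm_leI)
  fix v :: "complex vec" assume "v \<in> carrier_vec (dim_col (0\<^sub>m n m))"
  then have "0\<^sub>m n m *\<^sub>v v = 0\<^sub>v n" by (intro eq_vecI) (auto simp: scalar_prod_def)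
  then show "cvec_norm (0\<^sub>m n m *\<^sub>v v) \<le> 0 * cvec_norm v" by simp
qed

lemma op_norm_le_power:
  assumes "A \<in> carrier_mat n n" "op_norm_le A a" "0 \<le> a"
  shows "op_norm_le (A ^\<^sub>m k) (a ^ k)"
proof (induction k)
  case (Suc k)
  have "op_norm_le (A ^\<^sub>m k * A) (a ^ k * a)"
    using assms by (intro op_norm_le_mult[OF _ assms(1) Suc assms(2)]) auto
  then show ?case by (simp add: mult.commute)
qed (simp add: op_norm_le_one_mat)

lemma norm_index_le_op_norm:
  assumes A: "A \<in> carrier_mat n m" "op_norm_le A a" and ij: "i < n" "j < m"
  shows "cmod (A $$ (i,j)) \<le> a"
proof -
  have "(A *\<^sub>v unit_vec m j) $ i = A $$ (i,j)"
    using index_mult_mat_vec_sum[OF A(1) _ ij(1)] ij by (simp add: if_distrib cong: if_cong)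
  then have "cmod (A $$ (i,j)) \<le> cvec_norm (A *\<^sub>v unit_vec m j)"
    using norm_index_le_cvec_norm[of i "A *\<^sub>v unit_vec m j"] A ij by auto
  also have "\<dots> \<le> a * cvec_norm (unit_vec m j)" using op_norm_leD[OF A(2)] A by auto
  also have "\<dots> = a" using cvec_norm_unit_vec[OF ij(2)] by simp
  finally show ?thesis .
qed

lemma op_norm_le_approx:
  assumes "\<And>d. d > 0 \<Longrightarrow> op_norm_le A (b + d)"
  shows "op_norm_le A b"
proof (rule op_norm_leI)
  fix v :: "complex vec" assume v: "v \<in> carrier_vec (dim_col A)"
  show "cvec_norm (A *\<^sub>v v) \<le> b * cvec_norm v"
  proof (rule field_le_epsilon)
    fix e :: real assume e: "0 < e"
    define d where "d = e / (cvec_norm v + 1)"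
    have pos: "cvec_norm v + 1 > 0" using cvec_norm_nonneg[of v] by linarith
    have "cvec_norm (A *\<^sub>v v) \<le> (b + d) * cvec_norm v"
      using op_norm_leD[OF assms v] e pos by (simp add: d_def)
    also have "\<dots> \<le> b * cvec_norm v + e"
      using e pos by (simp add: d_def field_simps)
    finally show "cvec_norm (A *\<^sub>v v) \<le> b * cvec_norm v + e" .
  qed
qed

lemma op_norm_le_Schur_test:
  assumes A: "A \<in> carrier_mat n n" and r: "0 \<le> r"
    and rows: "\<And>i. i < n \<Longrightarrow> (\<Sum>j<n. cmod (A $$ (i,j))) \<le> r"
    and cols: "\<And>j. j < n \<Longrightarrow> (\<Sum>i<n. cmod (A $$ (i,j))) \<le> r"
  shows "op_norm_le A r"
proof (rule op_norm_leI)
  fix v :: "complex vec" assume "v \<in> carrier_vec (dim_col A)"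
  then have v: "v \<in> carrier_vec n" using A by simp
  let ?a = "\<lambda>i j. cmod (A $$ (i,j))"
  have row_bound: "(cmod ((A *\<^sub>v v) $ i))\<^sup>2 \<le> r * (\<Sum>j<n. ?a i j * (cmod (v $ j))\<^sup>2)" if i: "i < n" for i
  proof -
    have "cmod ((A *\<^sub>v v) $ i) \<le> (\<Sum>j<n. sqrt (?a i j) * (sqrt (?a i j) * cmod (v $ j)))"
      unfolding index_mult_mat_vec_sum[OF A v i]
      by (rule order_trans[OF norm_sum]) (simp add: norm_mult mult.assoc[symmetric])
    then have "(cmod ((A *\<^sub>v v) $ i))\<^sup>2 \<le> (\<Sum>j<n. sqrt (?a i j) * (sqrt (?a i j) * cmod (v $ j)))\<^sup>2"
      by (rule power_mono) simp
    also have "\<dots> \<le> (\<Sum>j<n. (sqrt (?a i j))\<^sup>2) * (\<Sum>j<n. (sqrt (?a i j) * cmod (v $ j))\<^sup>2)"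
      by (rule Cauchy_Schwarz_ineq_sum)
    also have "\<dots> = (\<Sum>j<n. ?a i j) * (\<Sum>j<n. ?a i j * (cmod (v $ j))\<^sup>2)"
      by (simp add: power_mult_distrib)
    also have "\<dots> \<le> r * (\<Sum>j<n. ?a i j * (cmod (v $ j))\<^sup>2)"
      by (rule mult_right_mono[OF rows[OF i]]) (auto intro!: sum_nonneg)
    finally show ?thesis .
  qed
  have "(cvec_norm (A *\<^sub>v v))\<^sup>2 = (\<Sum>i<n. (cmod ((A *\<^sub>v v) $ i))\<^sup>2)"
    using A by (simp add: cvec_norm_power2)
  also have "\<dots> \<le> (\<Sum>i<n. r * (\<Sum>j<n. ?a i j * (cmod (v $ j))\<^sup>2))"
    by (rule sum_mono) (rule row_bound, simp)
  also have "\<dots> = r * (\<Sum>i<n. \<Sum>j<n. ?a i j * (cmod (v $ j))\<^sup>2)"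
    by (simp add: sum_distrib_left)
  also have "\<dots> = r * (\<Sum>j<n. (\<Sum>i<n. ?a i j) * (cmod (v $ j))\<^sup>2)"
    by (subst sum.swap) (simp add: sum_distrib_right)
  also have "\<dots> \<le> r * (\<Sum>j<n. r * (cmod (v $ j))\<^sup>2)"
    by (intro mult_left_mono[OF _ r] sum_mono mult_right_mono cols) auto
  also have "\<dots> = (r * cvec_norm v)\<^sup>2"
    unfolding power_mult_distrib cvec_norm_power2 using v
    by (simp add: sum_distrib_left power2_eq_square mult.assoc)
  finally show "cvec_norm (A *\<^sub>v v) \<le> r * cvec_norm v"
    by (rule power2_le_imp_le) (simp add: r)
qed

lemma op_norm_le_if_form_le:
  assumes A: "A \<in> carrier_mat n m" and b: "0 \<le> b"
    and form: "\<And>v w. v \<in> carrier_vec m \<Longrightarrow> w \<in> carrier_vec n \<Longrightarrow>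
      cmod (\<Sum>j<n. cnj (w $ j) * (A *\<^sub>v v) $ j) \<le> b * cvec_norm v * cvec_norm w"
  shows "op_norm_le A b"
proof (rule op_norm_leI)
  fix v :: "complex vec" assume "v \<in> carrier_vec (dim_col A)"
  then have v: "v \<in> carrier_vec m" using A by simp
  define u where "u = A *\<^sub>v v"
  have u: "u \<in> carrier_vec n" using A v by (simp add: u_def)
  have "(\<Sum>j<n. cnj (u $ j) * u $ j) = of_real ((cvec_norm u)\<^sup>2)"
    using u by (intro sum_cnj_mult_self) auto
  then have "(cvec_norm u)\<^sup>2 \<le> b * cvec_norm v * cvec_norm u"
    using form[OF v u, folded u_def] by (simp add: norm_power)
  then have "cvec_norm u * cvec_norm u \<le> (b * cvec_norm v) * cvec_norm u"
    by (simp add: power2_eq_square mult.commute mult.left_commute)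
  then show "cvec_norm (A *\<^sub>v v) \<le> b * cvec_norm v"
    unfolding u_def[symmetric] using b
    by (cases "cvec_norm u = 0") (auto simp: mult_le_cancel_right_pos less_le)
qed

lemma form_le_if_op_norm_le:
  assumes A: "A \<in> carrier_mat n m" "op_norm_le A b" "0 \<le> b"
    and v: "v \<in> carrier_vec m" and w: "w \<in> carrier_vec n"
  shows "cmod (\<Sum>j<n. cnj (w $ j) * (A *\<^sub>v v) $ j) \<le> b * cvec_norm v * cvec_norm w"
proof -
  have "cmod (\<Sum>j<n. cnj (w $ j) * (A *\<^sub>v v) $ j) \<le> cvec_norm w * cvec_norm (A *\<^sub>v v)"
    using A v w by (intro norm_sum_cnj_mult_le) auto
  also have "\<dots> \<le> cvec_norm w * (b * cvec_norm v)"
    using A v by (intro mult_left_mono op_norm_leD) auto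
  finally show ?thesis by (simp add: mult.commute mult.left_commute)
qed

section \<open>Matrices of bounded rank\<close>

definition outer_mat :: "nat \<Rightarrow> (nat \<Rightarrow> complex) \<Rightarrow> (nat \<Rightarrow> complex) \<Rightarrow> complex mat" where
  "outer_mat n u w = mat n n (\<lambda>(i,j). u i * w j)"

fun outer_sum :: "nat \<Rightarrow> ((nat \<Rightarrow> complex) \<times> (nat \<Rightarrow> complex)) list \<Rightarrow> complex mat" where
  "outer_sum n [] = 0\<^sub>m n n"
| "outer_sum n (p # ps) = outer_mat n (fst p) (snd p) + outer_sum n ps"

lemma outer_mat_carrier [simp]: "outer_mat n u w \<in> carrier_mat n n"
  by (simp add: outer_mat_def)

lemma outer_sum_carrier [simp]: "outer_sum n ps \<in> carrier_mat n n"
  by (induction ps) auto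

lemma outer_sum_dim [simp]: "dim_row (outer_sum n ps) = n" "dim_col (outer_sum n ps) = n"
  using outer_sum_carrier[of n ps] by (auto simp del: outer_sum_carrier)

lemma index_outer_sum:
  "i < n \<Longrightarrow> j < n \<Longrightarrow> outer_sum n ps $$ (i,j) = (\<Sum>p\<leftarrow>ps. fst p i * snd p j)"
  by (induction ps) (auto simp: outer_mat_def simp del: outer_sum.simps(2) simp add: outer_sum.simps(2)[of n])

lemma outer_sum_append: "outer_sum n (ps @ qs) = outer_sum n ps + outer_sum n qs"
  by (rule eq_matI) (auto simp: index_outer_sum)

lemma mult_outer_sum:
  assumes W: "W \<in> carrier_mat n n"
  shows "W * outer_sum n ps = outer_sum n (map (\<lambda>p. (\<lambda>i. \<Sum>k<n. W $$ (i,k) * fst p k, snd p)) ps)"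
proof (rule eq_matI)
  fix i j assume "i < dim_row (outer_sum n (map (\<lambda>p. (\<lambda>i. \<Sum>k<n. W $$ (i,k) * fst p k, snd p)) ps))"
    "j < dim_col (outer_sum n (map (\<lambda>p. (\<lambda>i. \<Sum>k<n. W $$ (i,k) * fst p k, snd p)) ps))"
  then have i: "i < n" and j: "j < n" by auto
  have "(W * outer_sum n ps) $$ (i,j) = (\<Sum>k<n. W $$ (i,k) * (\<Sum>p\<leftarrow>ps. fst p k * snd p j))"
    using W i j by (auto simp: scalar_prod_def lessThan_atLeast0 index_outer_sum intro!: sum.cong)
  also have "\<dots> = (\<Sum>p\<leftarrow>ps. (\<Sum>k<n. W $$ (i,k) * fst p k) * snd p j)"
    by (induction ps) (auto simp: algebra_simps sum.distrib sum_distrib_left sum_distrib_right)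
  finally show "(W * outer_sum n ps) $$ (i,j) =
      outer_sum n (map (\<lambda>p. (\<lambda>i. \<Sum>k<n. W $$ (i,k) * fst p k, snd p)) ps) $$ (i,j)"
    using i j by (simp add: index_outer_sum o_def)
qed (use W in auto)

lemma outer_sum_mult:
  assumes W: "W \<in> carrier_mat n n"
  shows "outer_sum n ps * W = outer_sum n (map (\<lambda>p. (fst p, \<lambda>j. \<Sum>k<n. snd p k * W $$ (k,j))) ps)"
proof (rule eq_matI)
  fix i j assume "i < dim_row (outer_sum n (map (\<lambda>p. (fst p, \<lambda>j. \<Sum>k<n. snd p k * W $$ (k,j))) ps))"
    "j < dim_col (outer_sum n (map (\<lambda>p. (fst p, \<lambda>j. \<Sum>k<n. snd p k * W $$ (k,j))) ps))"
  then have i: "i < n" and j: "j < n" by auto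
  have "(outer_sum n ps * W) $$ (i,j) = (\<Sum>k<n. (\<Sum>p\<leftarrow>ps. fst p i * snd p k) * W $$ (k,j))"
    using W i j by (auto simp: scalar_prod_def lessThan_atLeast0 index_outer_sum intro!: sum.cong)
  also have "\<dots> = (\<Sum>p\<leftarrow>ps. fst p i * (\<Sum>k<n. snd p k * W $$ (k,j)))"
    by (induction ps) (auto simp: algebra_simps sum.distrib sum_distrib_left sum_distrib_right)
  finally show "(outer_sum n ps * W) $$ (i,j) =
      outer_sum n (map (\<lambda>p. (fst p, \<lambda>j. \<Sum>k<n. snd p k * W $$ (k,j))) ps) $$ (i,j)"
    using i j by (simp add: index_outer_sum o_def)
qed (use W in auto)

lemma smult_outer_sum: "c \<cdot>\<^sub>m outer_sum n ps = outer_sum n (map (\<lambda>p. (\<lambda>i. c * fst p i, snd p)) ps)"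
proof (rule eq_matI)
  fix i j assume "i < dim_row (outer_sum n (map (\<lambda>p. (\<lambda>i. c * fst p i, snd p)) ps))"
    "j < dim_col (outer_sum n (map (\<lambda>p. (\<lambda>i. c * fst p i, snd p)) ps))"
  then show "(c \<cdot>\<^sub>m outer_sum n ps) $$ (i,j) = outer_sum n (map (\<lambda>p. (\<lambda>i. c * fst p i, snd p)) ps) $$ (i,j)"
    by (simp add: index_outer_sum o_def sum_list_const_mult[symmetric] mult.assoc)
qed auto

lemma rank_outer_sum_le: "vec_space.rank n (outer_sum n ps) \<le> length ps"
proof (induction ps)
  case Nil then show ?case by (simp add: vec_space.rank_0I)
next
  case (Cons p ps)
  have "vec_space.rank n (outer_mat n (fst p) (snd p)) \<le> 1"
    by (rule vec_space.rank_le_1_product_entries[of _ n, where f = "fst p" and g = "snd p"])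
      (auto simp: outer_mat_def)
  moreover have "vec_space.rank n (outer_sum n (p # ps))
      \<le> vec_space.rank n (outer_mat n (fst p) (snd p)) + vec_space.rank n (outer_sum n ps)"
    by (simp, rule vec_space.rank_subadditive[OF outer_mat_carrier outer_sum_carrier])
  ultimately show ?case using Cons by simp
qed

text \<open>Rank is handled through explicit rank-one decompositions, which are preserved by sums and by
  multiplication with arbitrary matrices on either side.\<close>

definition low_rank :: "nat \<Rightarrow> nat \<Rightarrow> complex mat \<Rightarrow> bool" where
  "low_rank n k R \<longleftrightarrow> (\<exists>ps. length ps \<le> k \<and> R = outer_sum n ps)"

lemma low_rank_carrier: "low_rank n k R \<Longrightarrow> R \<in> carrier_mat n n"
  unfolding low_rank_def by auto

lemma cmat_rank_le_if_low_rank: "low_rank n k R \<Longrightarrow> cmat_rank R \<le> k"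
  unfolding low_rank_def cmat_rank_def by (auto intro: order_trans[OF rank_outer_sum_le])

lemma low_rank_zero_mat: "low_rank n 0 (0\<^sub>m n n)"
  unfolding low_rank_def by (intro exI[of _ "[]"]) auto

lemma low_rank_add:
  assumes "low_rank n k R" "low_rank n l S"
  shows "low_rank n (k + l) (R + S)"
proof -
  obtain ps qs where "length ps \<le> k" "R = outer_sum n ps" "length qs \<le> l" "S = outer_sum n qs"
    using assms unfolding low_rank_def by blast
  then show ?thesis unfolding low_rank_def by (intro exI[of _ "ps @ qs"]) (simp add: outer_sum_append)
qed

lemma low_rank_mult_left:
  assumes "W \<in> carrier_mat n n" "low_rank n k R"
  shows "low_rank n k (W * R)"
proof -
  obtain ps where ps: "length ps \<le> k" "R = outer_sum n ps"
    using assms(2) unfolding low_rank_def by blast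
  show ?thesis unfolding low_rank_def ps(2) mult_outer_sum[OF assms(1)]
    by (rule exI, rule conjI[OF _ refl]) (simp add: ps(1))
qed

lemma low_rank_mult_right:
  assumes "W \<in> carrier_mat n n" "low_rank n k R"
  shows "low_rank n k (R * W)"
proof -
  obtain ps where ps: "length ps \<le> k" "R = outer_sum n ps"
    using assms(2) unfolding low_rank_def by blast
  show ?thesis unfolding low_rank_def ps(2) outer_sum_mult[OF assms(1)]
    by (rule exI, rule conjI[OF _ refl]) (simp add: ps(1))
qed

lemma low_rank_smult:
  assumes "low_rank n k R"
  shows "low_rank n k (c \<cdot>\<^sub>m R)"
proof -
  obtain ps where ps: "length ps \<le> k" "R = outer_sum n ps"
    using assms unfolding low_rank_def by blast
  show ?thesis unfolding low_rank_def ps(2) smult_outer_sum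
    by (rule exI, rule conjI[OF _ refl]) (simp add: ps(1))
qed

lemma low_rank_if_columns_vanish:
  assumes R: "R \<in> carrier_mat n n" and ks: "distinct ks" "set ks \<subseteq> {..<n}"
    and zero: "\<And>i k. i < n \<Longrightarrow> k < n \<Longrightarrow> k \<notin> set ks \<Longrightarrow> R $$ (i,k) = 0"
  shows "low_rank n (length ks) R"
proof -
  define ps where "ps = map (\<lambda>k. (\<lambda>i. R $$ (i,k), \<lambda>j. if j = k then 1 else 0 :: complex)) ks"
  have "R = outer_sum n ps"
  proof (rule eq_matI)
    fix i j assume "i < dim_row (outer_sum n ps)" "j < dim_col (outer_sum n ps)"
    then have i: "i < n" and j: "j < n" by auto
    have "outer_sum n ps $$ (i,j) = (\<Sum>k\<in>set ks. R $$ (i,k) * (if j = k then 1 else 0))"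
      using i j ks(1) by (simp add: index_outer_sum ps_def o_def sum_list_distinct_conv_sum_set)
    also have "\<dots> = R $$ (i,j)"
      using zero[OF i j] by (simp add: if_distrib[of "\<lambda>x. _ * x"] sum.delta cong: if_cong)
    finally show "R $$ (i,j) = outer_sum n ps $$ (i,j)" ..
  qed (use R in auto)
  then show ?thesis unfolding low_rank_def by (intro exI[of _ ps]) (simp add: ps_def)
qed

section \<open>Fourier coefficients and trigonometric polynomials\<close>

definition cis_int :: "int \<Rightarrow> real \<Rightarrow> complex" where
  "cis_int m \<theta> = exp (\<i> * of_int m * of_real \<theta>)"

lemma continuous_on_cis_int [continuous_intros]: "continuous_on S (cis_int m)"
  unfolding cis_int_def by (intro continuous_intros)

lemma cis_int_mult: "cis_int a \<theta> * cis_int b \<theta> = cis_int (a + b) \<theta>"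
  unfolding cis_int_def by (simp add: exp_add[symmetric] algebra_simps)

lemma cnj_cis_int: "cnj (cis_int a \<theta>) = cis_int (- a) \<theta>"
  unfolding cis_int_def by (simp add: exp_cnj)

lemma cis_int_mult_cnj: "cis_int a \<theta> * cnj (cis_int b \<theta>) = cis_int (a - b) \<theta>"
  using cis_int_mult[of a \<theta> "-b"] by (simp add: cnj_cis_int)

lemma cis_int_minus_pi: "cis_int m (-pi) = cis_int m pi"
proof -
  have "exp (\<i> * of_int m * of_real pi) = exp (\<i> * of_int m * of_real (- pi) + \<i> * (of_int m * (of_real pi * 2)))"
    by (rule arg_cong[where f = exp]) (simp add: algebra_simps)
  also have "\<dots> = exp (\<i> * of_int m * of_real (- pi))" by (rule exp_plus_2pin)
  finally show ?thesis unfolding cis_int_def ..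
qed

lemma has_integral_cis_int:
  "(cis_int m has_integral (if m = 0 then of_real (2 * pi) else 0)) {-pi..pi}"
proof (cases "m = 0")
  case True
  moreover have "cis_int 0 = (\<lambda>_. 1)" by (simp add: cis_int_def fun_eq_iff)
  ultimately show ?thesis
    using has_integral_const_real[of "1 :: complex" "-pi" pi] by (simp add: scaleR_conv_of_real)
next
  case False
  define c where "c = \<i> * of_int m"
  have c: "c \<noteq> 0" using False by (simp add: c_def)
  have "((\<lambda>z. exp (c * z) / c) has_field_derivative exp (c * z)) (at z)" for z
    by (rule derivative_eq_intros refl | simp add: c)+
  then have "((\<lambda>x. exp (c * of_real x) / c) has_vector_derivative exp (c * of_real x)) (at x within {-pi..pi})" for x
    by (rule has_vector_derivative_real_field)
  from fundamental_theorem_of_calculus[of "-pi" pi "\<lambda>x. exp (c * of_real x) / c", OF _ this]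
  have "((\<lambda>x. exp (c * of_real x)) has_integral exp (c * of_real pi) / c - exp (c * of_real (-pi)) / c) {-pi..pi}"
    by simp
  moreover have eq: "cis_int m = (\<lambda>x. exp (c * of_real x))"
    by (simp add: cis_int_def c_def fun_eq_iff)
  moreover have "exp (c * of_real pi) = exp (c * of_real (-pi))"
    using cis_int_minus_pi[of m] by (simp add: eq)
  ultimately show ?thesis using False by simp
qed

lemma fourier_coeff_eq:
  "fourier_coeff f k = (1 / (2 * of_real pi)) * integral {-pi..pi} (\<lambda>\<theta>. f \<theta> * cis_int (- k) \<theta>)"
  unfolding fourier_coeff_def cis_int_def by simp

lemma has_integral_fourier_coeff:
  assumes "continuous_on {-pi..pi} f"
  shows "((\<lambda>\<theta>. f \<theta> * cis_int (- k) \<theta>) has_integral (2 * of_real pi) * fourier_coeff f k) {-pi..pi}"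
proof -
  have "(\<lambda>\<theta>. f \<theta> * cis_int (- k) \<theta>) integrable_on {-pi..pi}"
    by (intro integrable_continuous_real continuous_intros assms)
  then show ?thesis unfolding fourier_coeff_eq by (simp add: has_integral_integral)
qed

lemma fourier_coeff_diff:
  assumes "continuous_on {-pi..pi} f" "continuous_on {-pi..pi} g"
  shows "fourier_coeff (\<lambda>\<theta>. f \<theta> - g \<theta>) k = fourier_coeff f k - fourier_coeff g k"
proof -
  have "((\<lambda>\<theta>. (f \<theta> - g \<theta>) * cis_int (- k) \<theta>) has_integral
      (2 * of_real pi) * (fourier_coeff f k - fourier_coeff g k)) {-pi..pi}"
    using has_integral_diff[OF has_integral_fourier_coeff[OF assms(1)] has_integral_fourier_coeff[OF assms(2)]]
    by (simp add: algebra_simps)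
  then show ?thesis unfolding fourier_coeff_eq[of "\<lambda>\<theta>. f \<theta> - g \<theta>"] by (simp add: integral_unique)
qed

text \<open>A trigonometric polynomial is given by its list of (coefficient, frequency) pairs.\<close>

definition trig_poly :: "(complex \<times> int) list \<Rightarrow> real \<Rightarrow> complex" where
  "trig_poly ps \<theta> = (\<Sum>p\<leftarrow>ps. fst p * cis_int (snd p) \<theta>)"

definition trig_degree :: "(complex \<times> int) list \<Rightarrow> nat" where
  "trig_degree ps = Max (insert 0 ((\<lambda>p. nat \<bar>snd p\<bar>) ` set ps))"

definition coeff_norm_sum :: "(complex \<times> int) list \<Rightarrow> real" where
  "coeff_norm_sum ps = (\<Sum>p\<leftarrow>ps. cmod (fst p))"

lemma trig_poly_Nil [simp]: "trig_poly [] \<theta> = 0"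
  by (simp add: trig_poly_def)

lemma trig_poly_Cons [simp]: "trig_poly (p # ps) \<theta> = fst p * cis_int (snd p) \<theta> + trig_poly ps \<theta>"
  by (simp add: trig_poly_def)

lemma trig_poly_append: "trig_poly (ps @ qs) \<theta> = trig_poly ps \<theta> + trig_poly qs \<theta>"
  by (simp add: trig_poly_def)

lemma trig_poly_scale: "trig_poly (map (\<lambda>p. (c * fst p, snd p)) ps) \<theta> = c * trig_poly ps \<theta>"
  by (induction ps) (auto simp: algebra_simps)

lemma cnj_trig_poly: "cnj (trig_poly ps \<theta>) = trig_poly (map (\<lambda>p. (cnj (fst p), - snd p)) ps) \<theta>"
  by (induction ps) (auto simp: cnj_cis_int)

lemma trig_poly_minus_pi: "trig_poly ps (-pi) = trig_poly ps pi"
  by (induction ps) (auto simp: cis_int_minus_pi)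

lemma continuous_on_trig_poly [continuous_intros]: "continuous_on S (trig_poly ps)"
  unfolding trig_poly_def by (induction ps) (auto intro!: continuous_intros)

definition trig_poly_mult :: "(complex \<times> int) list \<Rightarrow> (complex \<times> int) list \<Rightarrow> (complex \<times> int) list" where
  "trig_poly_mult ps qs = concat (map (\<lambda>p. map (\<lambda>q. (fst p * fst q, snd p + snd q)) qs) ps)"

lemma trig_poly_mult: "trig_poly ps \<theta> * trig_poly qs \<theta> = trig_poly (trig_poly_mult ps qs) \<theta>"
proof (induction ps)
  case (Cons p ps)
  have "trig_poly (map (\<lambda>q. (fst p * fst q, snd p + snd q)) qs) \<theta> = fst p * cis_int (snd p) \<theta> * trig_poly qs \<theta>"
    by (induction qs) (auto simp: algebra_simps cis_int_mult[symmetric])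
  then show ?case using Cons by (simp add: trig_poly_mult_def trig_poly_append algebra_simps)
qed (simp add: trig_poly_mult_def)

lemma fourier_coeff_trig_poly:
  "fourier_coeff (trig_poly ps) k = (\<Sum>p\<leftarrow>ps. if snd p = k then fst p else 0)"
proof -
  have "((\<lambda>\<theta>. trig_poly ps \<theta> * cis_int (- k) \<theta>) has_integral
      (2 * of_real pi) * (\<Sum>p\<leftarrow>ps. if snd p = k then fst p else 0)) {-pi..pi}"
  proof (induction ps)
    case (Cons p ps)
    have e: "(\<lambda>\<theta>. trig_poly (p # ps) \<theta> * cis_int (- k) \<theta>) =
        (\<lambda>\<theta>. fst p * cis_int (snd p - k) \<theta> + trig_poly ps \<theta> * cis_int (- k) \<theta>)"
      using cis_int_mult[of "snd p" _ "- k"] by (simp add: algebra_simps fun_eq_iff)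
    have "((\<lambda>\<theta>. fst p * cis_int (snd p - k) \<theta>) has_integral
        fst p * (if snd p = k then of_real (2 * pi) else 0)) {-pi..pi}"
      using has_integral_cis_int[of "snd p - k"] by (intro has_integral_mult_right) simp
    from has_integral_add[OF this Cons.IH] show ?case unfolding e by (auto simp: algebra_simps)
  qed simp
  then show ?thesis unfolding fourier_coeff_eq by (simp add: integral_unique)
qed

lemma fourier_coeff_trig_poly_eq_0:
  assumes "trig_degree ps < \<bar>k\<bar>"
  shows "fourier_coeff (trig_poly ps) k = 0"
proof -
  have "nat \<bar>snd p\<bar> \<le> trig_degree ps" if "p \<in> set ps" for p
    unfolding trig_degree_def using that by (intro Max_ge) auto
  then have "\<forall>p\<in>set ps. snd p \<noteq> k" using assms by fastforce
  then show ?thesis unfolding fourier_coeff_trig_poly by (induction ps) auto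
qed

lemma norm_fourier_coeff_trig_poly_le: "cmod (fourier_coeff (trig_poly ps) k) \<le> coeff_norm_sum ps"
  unfolding fourier_coeff_trig_poly coeff_norm_sum_def
proof (induction ps)
  case (Cons p ps)
  have "cmod ((if snd p = k then fst p else 0) + (\<Sum>p\<leftarrow>ps. if snd p = k then fst p else 0))
      \<le> cmod (if snd p = k then fst p else 0) + cmod (\<Sum>p\<leftarrow>ps. if snd p = k then fst p else 0)"
    by (rule norm_triangle_ineq)
  also have "\<dots> \<le> cmod (fst p) + (\<Sum>p\<leftarrow>ps. cmod (fst p))" using Cons by (intro add_mono) auto
  finally show ?case by simp
qed simp

lemma coeff_norm_sum_nonneg: "0 \<le> coeff_norm_sum ps"
  unfolding coeff_norm_sum_def by (induction ps) auto

section \<open>Operator norms of Toeplitz and optimal circulant matrices\<close>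

lemma index_toeplitz_mat:
  "j < n \<Longrightarrow> k < n \<Longrightarrow> toeplitz_mat g n $$ (j,k) = fourier_coeff g (int j - int k)"
  by (simp add: toeplitz_mat_def)

lemma toeplitz_mat_carrier [simp]: "toeplitz_mat g n \<in> carrier_mat n n"
  by (simp add: toeplitz_mat_def)

lemma toeplitz_mat_dim [simp]: "dim_row (toeplitz_mat g n) = n" "dim_col (toeplitz_mat g n) = n"
  by (simp_all add: toeplitz_mat_def)

lemma index_opt_circ:
  "j < n \<Longrightarrow> k < n \<Longrightarrow> opt_circ g n $$ (j,k) = opt_circ_coeff g n ((int j - int k) mod int n)"
  by (simp add: opt_circ_def)

lemma opt_circ_carrier [simp]: "opt_circ g n \<in> carrier_mat n n"
  by (simp add: opt_circ_def)

lemma opt_circ_dim [simp]: "dim_row (opt_circ g n) = n" "dim_col (opt_circ g n) = n"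
  by (simp_all add: opt_circ_def)

text \<open>Identifying \<open>v\<close> with \<open>P\<^sub>v(\<theta>) = \<Sum>\<^sub>k v\<^sub>k e\<^sup>i\<^sup>k\<^sup>\<theta>\<close>, the form \<open>\<langle>w, A\<^sub>n[g] v\<rangle>\<close> becomes
  \<open>(2\<pi>)\<^sup>-\<^sup>1 \<integral> g P\<^sub>v conj P\<^sub>w\<close>; with Parseval this bounds \<open>\<parallel>A\<^sub>n[g]\<parallel>\<close> by \<open>sup |g|\<close>.\<close>

lemma has_integral_cis_int_sum_mult_cnj:
  "((\<lambda>\<theta>. (\<Sum>j<n. \<alpha> j * cis_int (int j) \<theta>) * cnj (\<Sum>k<n. \<beta> k * cis_int (int k) \<theta>)) has_integral
     of_real (2 * pi) * (\<Sum>j<n. \<alpha> j * cnj (\<beta> j))) {-pi..pi}"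
proof -
  have "(\<Sum>j<n. \<alpha> j * cis_int (int j) \<theta>) * cnj (\<Sum>k<n. \<beta> k * cis_int (int k) \<theta>) =
        (\<Sum>j<n. \<Sum>k<n. (\<alpha> j * cnj (\<beta> k)) * cis_int (int j - int k) \<theta>)" for \<theta>
    by (simp add: cnj_sum sum_product cis_int_mult_cnj[symmetric] algebra_simps)
  moreover have "((\<lambda>\<theta>. \<Sum>j<n. \<Sum>k<n. (\<alpha> j * cnj (\<beta> k)) * cis_int (int j - int k) \<theta>) has_integral
      (\<Sum>j<n. \<Sum>k<n. (\<alpha> j * cnj (\<beta> k)) * (if int j - int k = 0 then of_real (2 * pi) else 0))) {-pi..pi}"
    by (intro has_integral_sum finite_lessThan has_integral_mult_right has_integral_cis_int)
  moreover have "(\<Sum>j<n. \<Sum>k<n. (\<alpha> j * cnj (\<beta> k)) * (if int j - int k = 0 then of_real (2 * pi) else 0)) =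
      of_real (2 * pi) * (\<Sum>j<n. \<alpha> j * cnj (\<beta> j))"
    by (simp add: if_distrib[of "\<lambda>x. _ * x"] sum.delta sum_distrib_left mult.commute cong: if_cong)
  ultimately show ?thesis by simp
qed

lemma has_integral_norm_cis_int_sum:
  assumes "dim_vec v = n"
  shows "((\<lambda>\<theta>. (cmod (\<Sum>j<n. v $ j * cis_int (int j) \<theta>))\<^sup>2) has_integral 2 * pi * (cvec_norm v)\<^sup>2) {-pi..pi}"
proof -
  have sq: "z * cnj z = complex_of_real ((cmod z)\<^sup>2)" for z by (metis complex_norm_square)
  have "(\<Sum>j<n. v $ j * cnj (v $ j)) = of_real ((cvec_norm v)\<^sup>2)"
    using sum_cnj_mult_self[OF assms] by (simp add: mult.commute)
  then have "((\<lambda>\<theta>. complex_of_real ((cmod (\<Sum>j<n. v $ j * cis_int (int j) \<theta>))\<^sup>2)) has_integral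
      of_real (2 * pi) * of_real ((cvec_norm v)\<^sup>2)) {-pi..pi}"
    using has_integral_cis_int_sum_mult_cnj[where n = n and \<alpha> = "\<lambda>j. v $ j" and \<beta> = "\<lambda>j. v $ j"]
    unfolding sq by simp
  from has_integral_linear[OF this bounded_linear_Re] show ?thesis by (simp add: o_def)
qed

lemma has_integral_toeplitz_form:
  assumes g: "continuous_on {-pi..pi} g" and v: "v \<in> carrier_vec n" and w: "w \<in> carrier_vec n"
  shows "((\<lambda>\<theta>. g \<theta> * ((\<Sum>k<n. v $ k * cis_int (int k) \<theta>) * cnj (\<Sum>j<n. w $ j * cis_int (int j) \<theta>)))
     has_integral of_real (2 * pi) * (\<Sum>j<n. cnj (w $ j) * (toeplitz_mat g n *\<^sub>v v) $ j)) {-pi..pi}"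
proof -
  have "g \<theta> * ((\<Sum>k<n. v $ k * cis_int (int k) \<theta>) * cnj (\<Sum>j<n. w $ j * cis_int (int j) \<theta>)) =
     (\<Sum>j<n. \<Sum>k<n. (cnj (w $ j) * v $ k) * (g \<theta> * cis_int (- (int j - int k)) \<theta>))" for \<theta>
    by (simp add: cnj_sum sum_product sum_distrib_left cis_int_mult_cnj[symmetric] algebra_simps)
  moreover have "((\<lambda>\<theta>. \<Sum>j<n. \<Sum>k<n. (cnj (w $ j) * v $ k) * (g \<theta> * cis_int (- (int j - int k)) \<theta>))
      has_integral (\<Sum>j<n. \<Sum>k<n. (cnj (w $ j) * v $ k) * ((2 * of_real pi) * fourier_coeff g (int j - int k))))
      {-pi..pi}"
    by (intro has_integral_sum finite_lessThan has_integral_mult_right has_integral_fourier_coeff g)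
  moreover have "(\<Sum>j<n. cnj (w $ j) * (toeplitz_mat g n *\<^sub>v v) $ j) =
      (\<Sum>j<n. \<Sum>k<n. (cnj (w $ j) * v $ k) * fourier_coeff g (int j - int k))"
  proof (intro sum.cong refl)
    fix j assume "j \<in> {..<n}"
    then have "(toeplitz_mat g n *\<^sub>v v) $ j = (\<Sum>k<n. fourier_coeff g (int j - int k) * v $ k)"
      using index_mult_mat_vec_sum[OF toeplitz_mat_carrier v] by (simp add: index_toeplitz_mat)
    then show "cnj (w $ j) * (toeplitz_mat g n *\<^sub>v v) $ j =
        (\<Sum>k<n. (cnj (w $ j) * v $ k) * fourier_coeff g (int j - int k))"
      by (simp add: sum_distrib_left algebra_simps)
  qed
  ultimately show ?thesis by (simp add: sum_distrib_left algebra_simps)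
qed

lemma mult_le_amgm: fixes p q t :: real assumes "0 < t" shows "p * q \<le> (t * q\<^sup>2 + p\<^sup>2 / t) / 2"
proof -
  have "0 \<le> (t * q - p)\<^sup>2 / t" using assms by simp
  then show ?thesis using assms by (simp add: power2_eq_square field_simps)
qed

lemma toeplitz_form_le_amgm:
  assumes g: "continuous_on {-pi..pi} g" and bound: "\<And>\<theta>. \<theta> \<in> {-pi..pi} \<Longrightarrow> cmod (g \<theta>) \<le> \<delta>"
    and v: "v \<in> carrier_vec n" and w: "w \<in> carrier_vec n" and t: "0 < t"
  shows "cmod (\<Sum>j<n. cnj (w $ j) * (toeplitz_mat g n *\<^sub>v v) $ j)
    \<le> \<delta> * (t * (cvec_norm w)\<^sup>2 + (cvec_norm v)\<^sup>2 / t) / 2"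
proof -
  have \<delta>: "0 \<le> \<delta>" using order_trans[OF norm_ge_zero bound[of 0]] by simp
  define P where "P \<theta> = (\<Sum>k<n. v $ k * cis_int (int k) \<theta>)" for \<theta>
  define Q where "Q \<theta> = (\<Sum>j<n. w $ j * cis_int (int j) \<theta>)" for \<theta>
  define x where "x = (\<Sum>j<n. cnj (w $ j) * (toeplitz_mat g n *\<^sub>v v) $ j)"
  define k where "k \<theta> = \<delta> * ((t * (cmod (Q \<theta>))\<^sup>2 + (cmod (P \<theta>))\<^sup>2 / t) / 2)" for \<theta>
  have F: "((\<lambda>\<theta>. g \<theta> * (P \<theta> * cnj (Q \<theta>))) has_integral of_real (2 * pi) * x) {-pi..pi}"
    unfolding P_def Q_def x_def by (rule has_integral_toeplitz_form[OF g v w])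
  have Ik: "(k has_integral pi * (\<delta> * (t * (cvec_norm w)\<^sup>2 + (cvec_norm v)\<^sup>2 / t))) {-pi..pi}"
  proof -
    have "(k has_integral \<delta> * ((t * (2 * pi * (cvec_norm w)\<^sup>2) + (2 * pi * (cvec_norm v)\<^sup>2) / t) / 2)) {-pi..pi}"
      unfolding k_def P_def Q_def using v w
      by (intro has_integral_mult_right has_integral_divide has_integral_add has_integral_norm_cis_int_sum) auto
    then show ?thesis by (simp add: algebra_simps add_divide_distrib)
  qed
  have "norm (integral {-pi..pi} (\<lambda>\<theta>. g \<theta> * (P \<theta> * cnj (Q \<theta>)))) \<le> integral {-pi..pi} k"
  proof (rule integral_norm_bound_integral)
    fix \<theta> assume "\<theta> \<in> {-pi..pi}"
    then have "cmod (g \<theta>) * (cmod (P \<theta>) * cmod (Q \<theta>)) \<le> \<delta> * (cmod (P \<theta>) * cmod (Q \<theta>))"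
      by (intro mult_right_mono bound) auto
    also have "\<dots> \<le> k \<theta>" unfolding k_def by (intro mult_left_mono[OF mult_le_amgm[OF t] \<delta>])
    finally show "norm (g \<theta> * (P \<theta> * cnj (Q \<theta>))) \<le> k \<theta>" by (simp add: norm_mult)
  qed (use F Ik in blast)+
  then have "pi * (2 * cmod x) \<le> pi * (\<delta> * (t * (cvec_norm w)\<^sup>2 + (cvec_norm v)\<^sup>2 / t))"
    using integral_unique[OF F] integral_unique[OF Ik] by (simp add: norm_mult mult.assoc)
  then show ?thesis unfolding x_def by simp
qed

lemma op_norm_le_toeplitz_mat:
  assumes g: "continuous_on {-pi..pi} g" and bound: "\<And>\<theta>. \<theta> \<in> {-pi..pi} \<Longrightarrow> cmod (g \<theta>) \<le> \<delta>"
  shows "op_norm_le (toeplitz_mat g n) \<delta>"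
proof (rule op_norm_le_if_form_le[OF toeplitz_mat_carrier])
  show \<delta>: "0 \<le> \<delta>" using order_trans[OF norm_ge_zero bound[of 0]] by simp
  fix v w :: "complex vec" assume v: "v \<in> carrier_vec n" and w: "w \<in> carrier_vec n"
  show "cmod (\<Sum>j<n. cnj (w $ j) * (toeplitz_mat g n *\<^sub>v v) $ j) \<le> \<delta> * cvec_norm v * cvec_norm w"
  proof (cases "cvec_norm v = 0 \<or> cvec_norm w = 0")
    case True
    then have "v = 0\<^sub>v n \<or> w = 0\<^sub>v n" using cvec_norm_eq_0D[OF v] cvec_norm_eq_0D[OF w] by blast
    then show ?thesis using v w by auto
  next
    case False
    then have pos: "0 < cvec_norm v" "0 < cvec_norm w"
      using cvec_norm_nonneg[of v] cvec_norm_nonneg[of w] by linarith+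
    have "cmod (\<Sum>j<n. cnj (w $ j) * (toeplitz_mat g n *\<^sub>v v) $ j) \<le>
        \<delta> * (cvec_norm v / cvec_norm w * (cvec_norm w)\<^sup>2 + (cvec_norm v)\<^sup>2 / (cvec_norm v / cvec_norm w)) / 2"
      using pos by (intro toeplitz_form_le_amgm[OF g bound v w] divide_pos_pos)
    also have "\<dots> = \<delta> * cvec_norm v * cvec_norm w"
      using pos by (simp add: field_simps power2_eq_square)
    finally show ?thesis .
  qed
qed

definition cshift :: "nat \<Rightarrow> nat \<Rightarrow> nat \<Rightarrow> nat" where
  "cshift n s x = (x + s) mod n"

lemma cshift_less: "0 < n \<Longrightarrow> cshift n s x < n"
  by (simp add: cshift_def)

lemma cshift_inverse: assumes "s < n" "x < n" shows "cshift n (n - s) (cshift n s x) = x"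
proof -
  have "cshift n (n - s) (cshift n s x) = (x + s + (n - s)) mod n"
    unfolding cshift_def by (rule mod_add_left_eq)
  also have "x + s + (n - s) = x + n" using assms by simp
  finally show ?thesis using assms by simp
qed

lemma cshift_inverse': assumes "s < n" "x < n" shows "cshift n s (cshift n (n - s) x) = x"
proof -
  have "cshift n s (cshift n (n - s) x) = (x + (n - s) + s) mod n"
    unfolding cshift_def by (rule mod_add_left_eq)
  also have "x + (n - s) + s = x + n" using assms by simp
  finally show ?thesis using assms by simp
qed

lemma sum_cshift: assumes "0 < n" shows "(\<Sum>x<n. h (cshift n s x)) = (\<Sum>y<n. h y)"
proof -
  have "cshift n s = cshift n (s mod n)" by (simp add: cshift_def fun_eq_iff mod_add_right_eq)
  moreover have "bij_betw (cshift n (s mod n)) {..<n} {..<n}"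
    by (rule bij_betw_byWitness[where f' = "cshift n (n - s mod n)"])
      (use assms cshift_inverse cshift_inverse' cshift_less in auto)
  ultimately show ?thesis by (metis sum.reindex_bij_betw)
qed

lemma cvec_norm_cshift:
  assumes "0 < n" "dim_vec u = n"
  shows "cvec_norm (vec n (\<lambda>y. u $ cshift n s y)) = cvec_norm u"
proof -
  have "(cvec_norm (vec n (\<lambda>y. u $ cshift n s y)))\<^sup>2 = (cvec_norm u)\<^sup>2"
    using sum_cshift[OF assms(1), of "\<lambda>x. (cmod (u $ x))\<^sup>2"] assms(2) by (simp add: cvec_norm_power2)
  then show ?thesis by (simp add: power2_eq_iff_nonneg)
qed

definition cyclic_average :: "nat \<Rightarrow> complex mat \<Rightarrow> complex mat" where
  "cyclic_average n A = mat n n (\<lambda>(j,k). (\<Sum>s<n. A $$ (cshift n s j, cshift n s k)) / of_nat n)"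

lemma form_cshift:
  assumes s: "s < n" and A: "A \<in> carrier_mat n n" and v: "v \<in> carrier_vec n" and w: "dim_vec w = n"
  shows "(\<Sum>j<n. cnj (w $ j) * (\<Sum>k<n. A $$ (cshift n s j, cshift n s k) * v $ k)) =
    (\<Sum>j<n. cnj (vec n (\<lambda>y. w $ cshift n (n - s) y) $ j) * (A *\<^sub>v vec n (\<lambda>y. v $ cshift n (n - s) y)) $ j)"
    (is "_ = (\<Sum>j<n. cnj (?w $ j) * (A *\<^sub>v ?v) $ j)")
proof -
  have n: "0 < n" using s by simp
  have "(\<Sum>k<n. A $$ (cshift n s j, cshift n s k) * v $ k) = (A *\<^sub>v ?v) $ cshift n s j" if "j < n" for j
  proof -
    have "(\<Sum>k<n. A $$ (cshift n s j, cshift n s k) * v $ k)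
        = (\<Sum>k<n. (\<lambda>z. A $$ (cshift n s j, z) * ?v $ z) (cshift n s k))"
      by (intro sum.cong refl) (simp add: cshift_less[OF n] cshift_inverse[OF s])
    also have "\<dots> = (\<Sum>z<n. A $$ (cshift n s j, z) * ?v $ z)"
      by (rule sum_cshift[OF n, of "\<lambda>z. A $$ (cshift n s j, z) * ?v $ z"])
    also have "\<dots> = (A *\<^sub>v ?v) $ cshift n s j"
      by (rule index_mult_mat_vec_sum[OF A _ cshift_less[OF n], symmetric]) simp
    finally show ?thesis .
  qed
  then have "(\<Sum>j<n. cnj (w $ j) * (\<Sum>k<n. A $$ (cshift n s j, cshift n s k) * v $ k))
      = (\<Sum>j<n. (\<lambda>y. cnj (?w $ y) * (A *\<^sub>v ?v) $ y) (cshift n s j))"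
    by (intro sum.cong refl) (simp add: cshift_less[OF n] cshift_inverse[OF s])
  also have "\<dots> = (\<Sum>j<n. cnj (?w $ j) * (A *\<^sub>v ?v) $ j)"
    by (rule sum_cshift[OF n, of "\<lambda>y. cnj (?w $ y) * (A *\<^sub>v ?v) $ y"])
  finally show ?thesis .
qed

lemma op_norm_le_cyclic_average:
  assumes A: "A \<in> carrier_mat n n" "op_norm_le A \<delta>" and \<delta>: "0 \<le> \<delta>"
  shows "op_norm_le (cyclic_average n A) \<delta>"
proof (rule op_norm_le_if_form_le[OF _ \<delta>])
  show C: "cyclic_average n A \<in> carrier_mat n n" by (simp add: cyclic_average_def)
  fix v w :: "complex vec" assume v: "v \<in> carrier_vec n" and w: "w \<in> carrier_vec n"
  define I where "I s = (\<Sum>j<n. cnj (w $ j) * (\<Sum>k<n. A $$ (cshift n s j, cshift n s k) * v $ k))" for s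
  have entry: "(cyclic_average n A *\<^sub>v v) $ j = (\<Sum>s<n. \<Sum>k<n. A $$ (cshift n s j, cshift n s k) * v $ k) / of_nat n"
    if j: "j < n" for j
  proof -
    have "(cyclic_average n A *\<^sub>v v) $ j = (\<Sum>k<n. (\<Sum>s<n. A $$ (cshift n s j, cshift n s k) * v $ k) / of_nat n)"
      using index_mult_mat_vec_sum[OF C v j] j
      by (simp add: cyclic_average_def sum_distrib_right)
    also have "\<dots> = (\<Sum>k<n. \<Sum>s<n. A $$ (cshift n s j, cshift n s k) * v $ k) / of_nat n"
      by (simp add: sum_divide_distrib)
    also have "\<dots> = (\<Sum>s<n. \<Sum>k<n. A $$ (cshift n s j, cshift n s k) * v $ k) / of_nat n"
      by (subst sum.swap) (rule refl)
    finally show ?thesis .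
  qed
  have "(\<Sum>j<n. cnj (w $ j) * (cyclic_average n A *\<^sub>v v) $ j)
      = (\<Sum>j<n. \<Sum>s<n. cnj (w $ j) * (\<Sum>k<n. A $$ (cshift n s j, cshift n s k) * v $ k)) / of_nat n"
    by (simp add: entry sum_divide_distrib sum_distrib_left)
  also have "\<dots> = (\<Sum>s<n. I s) / of_nat n"
    unfolding I_def by (subst sum.swap) (rule refl)
  finally have form: "(\<Sum>j<n. cnj (w $ j) * (cyclic_average n A *\<^sub>v v) $ j) = (\<Sum>s<n. I s) / of_nat n" .
  have "cmod (I s) \<le> \<delta> * cvec_norm v * cvec_norm w" if s: "s < n" for s
  proof -
    have "cmod (I s) \<le> \<delta> * cvec_norm (vec n (\<lambda>y. v $ cshift n (n - s) y)) * cvec_norm (vec n (\<lambda>y. w $ cshift n (n - s) y))"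
      unfolding I_def form_cshift[OF s A(1) v carrier_vecD[OF w]]
      by (intro form_le_if_op_norm_le[OF A \<delta>]) auto
    then show ?thesis using v w s by (simp add: cvec_norm_cshift[of n])
  qed
  then have "(\<Sum>s<n. cmod (I s)) \<le> (\<Sum>s<n. \<delta> * cvec_norm v * cvec_norm w)"
    by (intro sum_mono) simp
  then have "cmod (\<Sum>s<n. I s) \<le> of_nat n * (\<delta> * cvec_norm v * cvec_norm w)"
    using norm_sum[of I "{..<n}"] by simp
  then show "cmod (\<Sum>j<n. cnj (w $ j) * (cyclic_average n A *\<^sub>v v) $ j) \<le> \<delta> * cvec_norm v * cvec_norm w"
    unfolding form using \<delta> by (cases "n = 0") (simp_all add: norm_divide field_simps)
qed

lemma cshift_diff:
  assumes n: "0 < n" and d: "int d = (int j - int k) mod int n"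
  shows "int (cshift n s j) - int (cshift n s k) = (if d \<le> cshift n s j then int d else int d - int n)"
proof -
  have dn: "d < n" using d n by (metis of_nat_less_iff pos_mod_bound of_nat_0_less_iff)
  have "(int (cshift n s j) - int d) mod int n = ((int j + int s) - (int j - int k)) mod int n"
    unfolding cshift_def d by (simp add: of_nat_mod mod_diff_eq)
  also have "\<dots> = int (cshift n s k)" by (simp add: cshift_def of_nat_mod add.commute)
  finally have e: "int (cshift n s k) = (int (cshift n s j) - int d) mod int n" ..
  have j: "cshift n s j < n" using cshift_less[OF n] .
  show ?thesis
  proof (cases "d \<le> cshift n s j")
    case True
    then have "(int (cshift n s j) - int d) mod int n = int (cshift n s j) - int d"
      using j by (intro mod_pos_pos_trivial) auto
    then show ?thesis using True e by simp
  next
    case False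
    then have "(int (cshift n s j) - int d + int n) mod int n = int (cshift n s j) - int d + int n"
      using dn by (intro mod_pos_pos_trivial) auto
    then show ?thesis using False e by simp
  qed
qed

text \<open>The coefficient \<open>c\<^sub>d\<close> averages \<open>a\<^sub>d\<close> (taken \<open>n - d\<close> times) and \<open>a\<^sub>d\<^sub>-\<^sub>n\<close> (taken \<open>d\<close> times),
  which is exactly what averaging the Toeplitz entries along the cyclic shifts produces.\<close>

lemma opt_circ_coeff_eq_average:
  assumes n: "0 < n"
  shows "opt_circ_coeff g n ((int j - int k) mod int n) =
     (\<Sum>s<n. fourier_coeff g (int (cshift n s j) - int (cshift n s k))) / of_nat n"
proof -
  define a where "a = fourier_coeff g"
  define d where "d = nat ((int j - int k) mod int n)"
  have dd: "int d = (int j - int k) mod int n" unfolding d_def using n by simp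
  have dn: "d < n" using dd n by (metis of_nat_less_iff pos_mod_bound of_nat_0_less_iff)
  have "(\<Sum>s<n. a (int (cshift n s j) - int (cshift n s k)))
      = (\<Sum>s<n. (\<lambda>x. if d \<le> x then a (int d) else a (int d - int n)) (cshift n j s))"
    by (intro sum.cong refl) (simp only: cshift_diff[OF n dd], simp add: cshift_def add.commute)
  also have "\<dots> = (\<Sum>x<n. if d \<le> x then a (int d) else a (int d - int n))"
    by (rule sum_cshift[OF n])
  also have "\<dots> = (\<Sum>x\<in>{..<n} \<inter> {x. d \<le> x}. a (int d)) + (\<Sum>x\<in>{..<n} \<inter> - {x. d \<le> x}. a (int d - int n))"
    by (rule sum.If_cases) simp
  also have "{..<n} \<inter> {x. d \<le> x} = {d..<n}" by auto
  also have "{..<n} \<inter> - {x. d \<le> x} = {..<d}" using dn by auto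
  finally have "(\<Sum>s<n. a (int (cshift n s j) - int (cshift n s k)))
      = of_nat (n - d) * a (int d) + of_nat d * a (int d - int n)"
    by simp
  moreover have "(of_int (int n - int d) :: complex) = of_nat (n - d)" using dn by (simp add: of_nat_diff)
  ultimately show ?thesis unfolding opt_circ_coeff_def a_def dd[symmetric] by simp
qed

lemma opt_circ_eq_cyclic_average: "0 < n \<Longrightarrow> opt_circ g n = cyclic_average n (toeplitz_mat g n)"
  by (rule eq_matI)
    (simp_all add: cyclic_average_def index_opt_circ opt_circ_coeff_eq_average index_toeplitz_mat cshift_less)

lemma op_norm_le_opt_circ:
  assumes "op_norm_le (toeplitz_mat g n) \<delta>" "0 \<le> \<delta>"
  shows "op_norm_le (opt_circ g n) \<delta>"
proof (cases "n = 0")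
  case True
  then have "opt_circ g n = 0\<^sub>m 0 0" by (intro eq_matI) auto
  then show ?thesis using op_norm_le_mono[OF op_norm_le_zero_mat assms(2)] by simp
qed (use assms op_norm_le_cyclic_average opt_circ_eq_cyclic_average in auto)

section \<open>Density of trigonometric polynomials\<close>

lemma Arg2pi_Arg: "z \<noteq> 0 \<Longrightarrow> Arg2pi z = (if 0 \<le> Arg z then Arg z else Arg z + 2 * pi)"
proof -
  assume z: "z \<noteq> 0"
  have A: "is_Arg z (Arg z)" by (rule is_Arg_Arg[OF z])
  have B: "0 \<le> Arg2pi z" "Arg2pi z < 2 * pi" "is_Arg z (Arg2pi z)" using Arg2pi[of z] by auto
  have r: "-pi < Arg z" "Arg z \<le> pi" using mpi_less_Arg[of z] Arg_le_pi[of z] by auto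
  show ?thesis
  proof (cases "0 \<le> Arg z")
    case True
    have "Arg2pi z = Arg z" by (rule is_Arg_eqI[OF B(3) A _ z]) (use True r B in auto)
    then show ?thesis using True by simp
  next
    case False
    have A': "is_Arg z (Arg z + of_int 1 * (2 * pi))" using A is_Arg_2pi_iff by blast
    have "Arg2pi z = Arg z + of_int 1 * (2 * pi)" by (rule is_Arg_eqI[OF B(3) A' _ z]) (use False r B in auto)
    then show ?thesis using False by simp
  qed
qed

lemma continuous_on_sphere_comp_Arg:
  fixes f :: "real \<Rightarrow> complex"
  assumes cont: "continuous_on UNIV f" and per: "\<And>x. f (x + 2 * pi) = f x"
  shows "continuous_on (sphere 0 1) (\<lambda>z. f (Arg z))"
proof -
  have eq: "f (Arg z) = f (Arg2pi z)" for z
  proof (cases "z = 0")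
    case True then show ?thesis by (simp add: Arg_zero)
  next
    case False then show ?thesis using Arg2pi_Arg[OF False] per by simp
  qed
  have cf: "isCont f x" for x using cont by (simp add: continuous_on_eq_continuous_at)
  show ?thesis
  proof (rule continuous_at_imp_continuous_on, rule ballI)
    fix z :: complex assume z: "z \<in> sphere 0 1"
    then have z0: "z \<noteq> 0" by auto
    show "isCont (\<lambda>z. f (Arg z)) z"
    proof (cases "z \<in> \<real>\<^sub>\<le>\<^sub>0")
      case False
      show ?thesis by (rule continuous_at_compose[OF continuous_at_Arg[OF False] cf, unfolded o_def])
    next
      case True
      then have "z \<notin> \<real>\<^sub>\<ge>\<^sub>0" using z0 by (auto simp: nonpos_Reals_def nonneg_Reals_def)
      then have "isCont (\<lambda>z. f (Arg2pi z)) z"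
        by (rule continuous_at_compose[OF continuous_at_Arg2pi cf, unfolded o_def])
      then show ?thesis by (simp add: eq)
    qed
  qed
qed

lemma sphere_eq_cis_int: assumes "z \<in> sphere 0 1" shows "z = cis_int 1 (Arg z)"
proof -
  have "z \<noteq> 0" "cmod z = 1" using assms by auto
  then show ?thesis using Arg_eq[of z] by (simp add: cis_int_def)
qed

definition trig_poly_Re :: "(complex \<times> int) list \<Rightarrow> (complex \<times> int) list" where
  "trig_poly_Re ps = map (\<lambda>p. ((1/2) * fst p, snd p)) (ps @ map (\<lambda>p. (cnj (fst p), - snd p)) ps)"

lemma trig_poly_Re: "trig_poly (trig_poly_Re ps) \<theta> = of_real (Re (trig_poly ps \<theta>))"
proof -
  have "trig_poly (trig_poly_Re ps) \<theta> = (1/2) * (trig_poly ps \<theta> + cnj (trig_poly ps \<theta>))"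
    unfolding trig_poly_Re_def trig_poly_scale trig_poly_append cnj_trig_poly ..
  then show ?thesis by (simp add: complex_add_cnj)
qed

lemma Re_trig_poly_mult_trig_poly_Re:
  "Re (trig_poly (trig_poly_mult ps (trig_poly_Re qs)) \<theta>) = Re (trig_poly ps \<theta>) * Re (trig_poly qs \<theta>)"
  unfolding trig_poly_mult[symmetric] trig_poly_Re by simp

lemma Re_Im_eq_Re_trig_poly_Arg:
  assumes "z \<in> sphere 0 1"
  shows "Re z = Re (trig_poly [(1, 1)] (Arg z))" "Im z = Re (trig_poly [(-\<i>, 1)] (Arg z))"
  using sphere_eq_cis_int[OF assms] by simp_all

text \<open>Stone-Weierstrass on the unit circle: real parts of trigonometric polynomials in \<open>Arg z\<close> form
  an algebra containing \<open>Re z\<close> and \<open>Im z\<close>, which separate points.\<close>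

lemma real_trig_poly_approx_on_sphere:
  fixes h :: "complex \<Rightarrow> real"
  assumes "continuous_on (sphere 0 1) h" "0 < e"
  shows "\<exists>ps. \<forall>z\<in>sphere 0 1. \<bar>h z - Re (trig_poly ps (Arg z))\<bar> < e"
proof -
  define S :: "complex set" where "S = sphere 0 1"
  define P where "P g \<longleftrightarrow> continuous_on S g \<and> (\<exists>ps. \<forall>z\<in>S. g z = Re (trig_poly ps (Arg z)))"
    for g :: "complex \<Rightarrow> real"
  have "\<exists>g. P g \<and> (\<forall>x\<in>S. \<bar>h x - g x\<bar> < e)"
  proof (rule Stone_Weierstrass_HOL)
    show "compact S" unfolding S_def by simp
    show "continuous_on S h" using assms(1) unfolding S_def .
    show "0 < e" by (rule assms(2))
    show "continuous_on S g" if "P g" for g using that unfolding P_def by blast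
    show "P (\<lambda>x. c)" for c
      unfolding P_def by (auto intro!: exI[of _ "[(of_real c, 0)]"] simp: cis_int_def)
    show "P (\<lambda>x. f x + g x)" if "P f \<and> P g" for f g
    proof -
      from that obtain ps qs where "\<forall>z\<in>S. f z = Re (trig_poly ps (Arg z))" "\<forall>z\<in>S. g z = Re (trig_poly qs (Arg z))"
        and "continuous_on S f" "continuous_on S g" unfolding P_def by blast
      then show ?thesis unfolding P_def
        by (intro conjI continuous_on_add exI[of _ "ps @ qs"]) (simp_all add: trig_poly_append)
    qed
    show "P (\<lambda>x. f x * g x)" if "P f \<and> P g" for f g
    proof -
      from that obtain ps qs where "\<forall>z\<in>S. f z = Re (trig_poly ps (Arg z))" "\<forall>z\<in>S. g z = Re (trig_poly qs (Arg z))"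
        and "continuous_on S f" "continuous_on S g" unfolding P_def by blast
      then show ?thesis unfolding P_def
        by (intro conjI continuous_on_mult exI[of _ "trig_poly_mult ps (trig_poly_Re qs)"])
          (auto simp: Re_trig_poly_mult_trig_poly_Re)
    qed
    show "\<exists>g. P g \<and> g x \<noteq> g y" if "x \<in> S \<and> y \<in> S \<and> x \<noteq> y" for x y
    proof -
      have "P Re" unfolding P_def S_def
        by (intro conjI continuous_intros exI[of _ "[(1, 1)]"] ballI) (rule Re_Im_eq_Re_trig_poly_Arg(1))
      moreover have "P Im" unfolding P_def S_def
        by (intro conjI continuous_intros exI[of _ "[(-\<i>, 1)]"] ballI) (rule Re_Im_eq_Re_trig_poly_Arg(2))
      moreover have "Re x \<noteq> Re y \<or> Im x \<noteq> Im y" using that complex_eqI by blast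
      ultimately show ?thesis by blast
    qed
  qed
  then obtain g ps where "\<forall>z\<in>S. g z = Re (trig_poly ps (Arg z))" "\<forall>x\<in>S. \<bar>h x - g x\<bar> < e"
    unfolding P_def by blast
  then show ?thesis unfolding S_def by (intro exI[of _ ps]) auto
qed

lemma trig_poly_approx_on_sphere:
  fixes h :: "complex \<Rightarrow> complex"
  assumes h: "continuous_on (sphere 0 1) h" and e: "0 < e"
  shows "\<exists>ps. \<forall>z\<in>sphere 0 1. cmod (h z - trig_poly ps (Arg z)) \<le> e"
proof -
  obtain ps where ps: "\<forall>z\<in>sphere 0 1. \<bar>Re (h z) - Re (trig_poly ps (Arg z))\<bar> < e / 2"
    using real_trig_poly_approx_on_sphere[OF continuous_on_Re[OF h], of "e / 2"] e by auto
  obtain qs where qs: "\<forall>z\<in>sphere 0 1. \<bar>Im (h z) - Re (trig_poly qs (Arg z))\<bar> < e / 2"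
    using real_trig_poly_approx_on_sphere[OF continuous_on_Im[OF h], of "e / 2"] e by auto
  define rs where "rs = trig_poly_Re ps @ map (\<lambda>p. (\<i> * fst p, snd p)) (trig_poly_Re qs)"
  have "cmod (h z - trig_poly rs (Arg z)) \<le> e" if z: "z \<in> sphere 0 1" for z
  proof -
    have "cmod (h z - trig_poly rs (Arg z))
        \<le> \<bar>Re (h z) - Re (trig_poly ps (Arg z))\<bar> + \<bar>Im (h z) - Re (trig_poly qs (Arg z))\<bar>"
      using cmod_le[of "h z - trig_poly rs (Arg z)"]
      by (simp add: rs_def trig_poly_append trig_poly_scale trig_poly_Re)
    then show ?thesis using ps qs z by fastforce
  qed
  then show ?thesis by blast
qed

lemma trig_poly_approx:
  fixes f :: "real \<Rightarrow> complex"
  assumes cont: "continuous_on UNIV f" and per: "\<And>x. f (x + 2 * pi) = f x" and e: "0 < e"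
  shows "\<exists>ps. \<forall>\<theta>\<in>{-pi..pi}. cmod (f \<theta> - trig_poly ps \<theta>) \<le> e"
proof -
  obtain ps where ps: "\<forall>z\<in>sphere 0 1. cmod (f (Arg z) - trig_poly ps (Arg z)) \<le> e"
    using trig_poly_approx_on_sphere[OF continuous_on_sphere_comp_Arg[OF cont per] e] by blast
  have "cmod (f \<theta> - trig_poly ps \<theta>) \<le> e" if "\<theta> \<in> {-pi..pi}" for \<theta>
  proof -
    define t where "t = (if \<theta> = -pi then pi else \<theta>)"
    have "Arg (cis t) = t" using that by (intro Arg_cis) (auto simp: t_def)
    moreover have "f t = f \<theta>" "trig_poly ps t = trig_poly ps \<theta>"
      using per[of "-pi"] by (auto simp: t_def trig_poly_minus_pi)
    ultimately show ?thesis using ps[rule_format, of "cis t"] by simp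
  qed
  then show ?thesis by blast
qed

section \<open>Splitting \<open>A\<^sub>n[f] - c\<^sub>n[f]\<close> into a low-rank and a small part\<close>

definition band_part :: "nat \<Rightarrow> complex mat \<Rightarrow> complex mat" where
  "band_part M A = mat (dim_row A) (dim_col A) (\<lambda>(j,k). if \<bar>int j - int k\<bar> \<le> int M then A $$ (j,k) else 0)"

definition off_band_part :: "nat \<Rightarrow> complex mat \<Rightarrow> complex mat" where
  "off_band_part M A = mat (dim_row A) (dim_col A) (\<lambda>(j,k). if \<bar>int j - int k\<bar> \<le> int M then 0 else A $$ (j,k))"

lemma band_part_carrier [simp]: "A \<in> carrier_mat n m \<Longrightarrow> band_part M A \<in> carrier_mat n m"
  by (simp add: band_part_def)

lemma off_band_part_carrier [simp]: "A \<in> carrier_mat n m \<Longrightarrow> off_band_part M A \<in> carrier_mat n m"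
  by (simp add: off_band_part_def)

lemma card_band_le: "card {k. k < n \<and> \<bar>int j - int k\<bar> \<le> int M} \<le> 2 * M + 1"
proof -
  have "card {k. k < n \<and> \<bar>int j - int k\<bar> \<le> int M} \<le> card {j - M .. j + M}"
    by (rule card_mono) auto
  then show ?thesis by simp
qed

lemma sum_band_le:
  fixes \<beta> :: real assumes "0 \<le> \<beta>"
  shows "(\<Sum>k<n. if \<bar>int j - int k\<bar> \<le> int M then \<beta> else 0) \<le> real (2 * M + 1) * \<beta>"
proof -
  have "(\<Sum>k<n. if \<bar>int j - int k\<bar> \<le> int M then \<beta> else 0) = real (card {k. k < n \<and> \<bar>int j - int k\<bar> \<le> int M}) * \<beta>"
    by (simp add: sum.If_cases lessThan_def Collect_conj_eq Int_commute)
  also have "\<dots> \<le> real (2 * M + 1) * \<beta>"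
    using card_band_le[of n j M] assms by (intro mult_right_mono) linarith+
  finally show ?thesis .
qed

lemma op_norm_le_band_part:
  assumes A: "A \<in> carrier_mat n n" and \<beta>: "0 \<le> \<beta>"
    and entries: "\<And>j k. j < n \<Longrightarrow> k < n \<Longrightarrow> \<bar>int j - int k\<bar> \<le> int M \<Longrightarrow> cmod (A $$ (j,k)) \<le> \<beta>"
  shows "op_norm_le (band_part M A) (real (2 * M + 1) * \<beta>)"
proof (rule op_norm_le_Schur_test)
  have entry: "cmod (band_part M A $$ (j,k)) \<le> (if \<bar>int j - int k\<bar> \<le> int M then \<beta> else 0)"
    if "j < n" "k < n" for j k
    using that A entries by (simp add: band_part_def)
  show "(\<Sum>k<n. cmod (band_part M A $$ (j,k))) \<le> real (2 * M + 1) * \<beta>" if "j < n" for j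
  proof -
    have "(\<Sum>k<n. cmod (band_part M A $$ (j,k))) \<le> (\<Sum>k<n. if \<bar>int j - int k\<bar> \<le> int M then \<beta> else 0)"
      using that entry by (intro sum_mono) auto
    then show ?thesis using sum_band_le[OF \<beta>, where n = n and j = j and M = M] by linarith
  qed
  show "(\<Sum>j<n. cmod (band_part M A $$ (j,k))) \<le> real (2 * M + 1) * \<beta>" if "k < n" for k
  proof -
    have "(\<Sum>j<n. cmod (band_part M A $$ (j,k))) \<le> (\<Sum>j<n. if \<bar>int k - int j\<bar> \<le> int M then \<beta> else 0)"
      using that entry by (intro sum_mono) (auto simp: abs_minus_commute)
    then show ?thesis using sum_band_le[OF \<beta>, where n = n and j = k and M = M] by linarith
  qed
qed (use A \<beta> in auto)

text \<open>The hypothesis confines the off-band part to the first and last \<open>M\<close> columns.\<close>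

lemma low_rank_off_band_part:
  assumes A: "A \<in> carrier_mat n n" and n: "2 * M \<le> n"
    and zero: "\<And>j k. j < n \<Longrightarrow> M \<le> k \<Longrightarrow> k < n - M \<Longrightarrow> int M < \<bar>int j - int k\<bar> \<Longrightarrow> A $$ (j,k) = 0"
  shows "low_rank n (2 * M) (off_band_part M A)"
proof -
  define ks where "ks = [0..<M] @ [n - M..<n]"
  have "low_rank n (length ks) (off_band_part M A)"
  proof (rule low_rank_if_columns_vanish)
    fix j k assume "j < n" "k < n" "k \<notin> set ks"
    then show "off_band_part M A $$ (j,k) = 0"
      using A zero[of j k] by (auto simp: off_band_part_def ks_def)
  qed (use A n in \<open>auto simp: ks_def\<close>)
  then show ?thesis using n by (simp add: ks_def mult_2)
qed

lemma index_toeplitz_minus_opt_circ: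
  assumes "j < n" "k < n"
  defines "d \<equiv> int j - int k"
  shows "(toeplitz_mat g n - opt_circ g n) $$ (j,k) =
    of_int \<bar>d\<bar> * (fourier_coeff g d - fourier_coeff g (d - sgn d * int n)) / of_nat n"
proof -
  define a where "a = fourier_coeff g"
  have n: "(of_nat n :: complex) \<noteq> 0" using assms(1) by simp
  have "(toeplitz_mat g n - opt_circ g n) $$ (j,k) = a d - opt_circ_coeff g n (d mod int n)"
    using assms by (simp add: index_toeplitz_mat index_opt_circ a_def)
  also have "\<dots> = of_int \<bar>d\<bar> * (a d - a (d - sgn d * int n)) / of_nat n"
  proof (cases "0 \<le> d")
    case True
    then have "d mod int n = d" using assms by (simp add: d_def)
    moreover have "sgn d * int n = int n" if "d \<noteq> 0" using True that by simp
    ultimately show ?thesis using True n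
      by (cases "d = 0") (simp_all add: opt_circ_coeff_def a_def field_simps)
  next
    case False
    have "d mod int n = (d + int n) mod int n" by simp
    also have "\<dots> = d + int n" using assms False by (intro mod_pos_pos_trivial) (auto simp: d_def)
    finally have "d mod int n = d + int n" .
    then show ?thesis using False n by (simp add: opt_circ_coeff_def a_def field_simps)
  qed
  finally show ?thesis unfolding a_def .
qed

text \<open>For a trigonometric polynomial of degree \<open>M\<close> with \<open>2 M < n\<close> the aliased coefficient at
  \<open>d - sgn d * n\<close> vanishes inside the band, and away from the first and last \<open>M\<close> columns both
  coefficients vanish outside it.\<close>

lemma norm_index_toeplitz_minus_opt_circ_trig_poly:
  assumes n: "2 * trig_degree ps < n" and jk: "j < n" "k < n" "\<bar>int j - int k\<bar> \<le> int (trig_degree ps)"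
  shows "cmod ((toeplitz_mat (trig_poly ps) n - opt_circ (trig_poly ps) n) $$ (j,k))
    \<le> real (trig_degree ps) * coeff_norm_sum ps / real n"
proof -
  define d where "d = int j - int k"
  have "fourier_coeff (trig_poly ps) (d - sgn d * int n) = 0" if "d \<noteq> 0"
    using n jk that by (intro fourier_coeff_trig_poly_eq_0) (auto simp: d_def sgn_if)
  then have "cmod ((toeplitz_mat (trig_poly ps) n - opt_circ (trig_poly ps) n) $$ (j,k))
      = real (nat \<bar>d\<bar>) * cmod (fourier_coeff (trig_poly ps) d) / real n"
    unfolding index_toeplitz_minus_opt_circ[OF jk(1,2)] d_def[symmetric]
    by (cases "d = 0") (simp_all add: norm_mult norm_divide)
  also have "\<dots> \<le> real (trig_degree ps) * coeff_norm_sum ps / real n"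
    using jk(3) by (intro divide_right_mono mult_mono norm_fourier_coeff_trig_poly_le)
      (auto simp: d_def coeff_norm_sum_nonneg)
  finally show ?thesis .
qed

lemma index_toeplitz_minus_opt_circ_trig_poly_eq_0:
  assumes jk: "j < n" "trig_degree ps \<le> k" "k < n - trig_degree ps" "int (trig_degree ps) < \<bar>int j - int k\<bar>"
  shows "(toeplitz_mat (trig_poly ps) n - opt_circ (trig_poly ps) n) $$ (j,k) = 0"
proof -
  define d where "d = int j - int k"
  have "fourier_coeff (trig_poly ps) d = 0" "fourier_coeff (trig_poly ps) (d - sgn d * int n) = 0"
    using jk by (auto intro!: fourier_coeff_trig_poly_eq_0 simp: d_def sgn_if)
  moreover have "k < n" using jk by simp
  ultimately show ?thesis using jk(1)
    unfolding index_toeplitz_minus_opt_circ[OF jk(1) \<open>k < n\<close>] d_def[symmetric] by simp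
qed

lemma toeplitz_mat_diff:
  assumes "continuous_on {-pi..pi} f" "continuous_on {-pi..pi} g"
  shows "toeplitz_mat (\<lambda>\<theta>. f \<theta> - g \<theta>) n = toeplitz_mat f n - toeplitz_mat g n"
  by (rule eq_matI) (simp_all add: index_toeplitz_mat fourier_coeff_diff[OF assms])

lemma opt_circ_diff:
  assumes "continuous_on {-pi..pi} f" "continuous_on {-pi..pi} g"
  shows "opt_circ (\<lambda>\<theta>. f \<theta> - g \<theta>) n = opt_circ f n - opt_circ g n"
proof -
  have "opt_circ_coeff (\<lambda>\<theta>. f \<theta> - g \<theta>) n e = opt_circ_coeff f n e - opt_circ_coeff g n e" for e
    unfolding opt_circ_coeff_def fourier_coeff_diff[OF assms]
    by (simp add: diff_divide_distrib[symmetric] algebra_simps)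
  then show ?thesis by (intro eq_matI) (simp_all add: index_opt_circ)
qed

lemma toeplitz_mat_split:
  fixes n :: nat
  assumes f: "continuous_on {-pi..pi} f" and p: "continuous_on {-pi..pi} p"
  defines "D \<equiv> toeplitz_mat p n - opt_circ p n"
  shows "toeplitz_mat f n = opt_circ f n + off_band_part M D +
    ((toeplitz_mat (\<lambda>\<theta>. f \<theta> - p \<theta>) n - opt_circ (\<lambda>\<theta>. f \<theta> - p \<theta>) n) + band_part M D)"
    (is "_ = _ + _ + ?S")
proof (rule eq_matI)
  fix j k assume "j < dim_row (opt_circ f n + off_band_part M D + ?S)" "k < dim_col (opt_circ f n + off_band_part M D + ?S)"
  then have jk: "j < n" "k < n" by (simp_all add: D_def band_part_def)
  then show "toeplitz_mat f n $$ (j,k) = (opt_circ f n + off_band_part M D + ?S) $$ (j,k)"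
    by (simp add: toeplitz_mat_diff[OF f p] opt_circ_diff[OF f p] D_def band_part_def off_band_part_def)
qed (simp_all add: D_def band_part_def off_band_part_def)

lemma toeplitz_eq_opt_circ_plus_low_rank_plus_small_trig_poly:
  fixes f :: "real \<Rightarrow> complex"
  assumes cf: "continuous_on {-pi..pi} f"
    and approx: "\<And>\<theta>. \<theta> \<in> {-pi..pi} \<Longrightarrow> cmod (f \<theta> - trig_poly ps \<theta>) \<le> \<delta>"
    and n: "2 * trig_degree ps < n"
  shows "\<exists>L S. low_rank n (2 * trig_degree ps) L \<and> S \<in> carrier_mat n n \<and>
    op_norm_le S (2 * \<delta> + real (2 * trig_degree ps + 1) * (real (trig_degree ps) * coeff_norm_sum ps / real n)) \<and>
    toeplitz_mat f n = opt_circ f n + L + S"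
proof -
  define M where "M = trig_degree ps"
  define g where "g \<theta> = f \<theta> - trig_poly ps \<theta>" for \<theta>
  define D where "D = toeplitz_mat (trig_poly ps) n - opt_circ (trig_poly ps) n"
  define S where "S = (toeplitz_mat g n - opt_circ g n) + band_part M D"
  have cg: "continuous_on {-pi..pi} g" unfolding g_def by (intro continuous_intros cf)
  have \<delta>: "0 \<le> \<delta>" using order_trans[OF norm_ge_zero approx[of 0]] by simp
  have Dc: "D \<in> carrier_mat n n" by (simp add: D_def minus_carrier_mat)
  have "toeplitz_mat f n = opt_circ f n + off_band_part M D + S"
    unfolding S_def D_def g_def by (rule toeplitz_mat_split[OF cf continuous_on_trig_poly])
  moreover have "low_rank n (2 * M) (off_band_part M D)"
  proof (rule low_rank_off_band_part[OF Dc])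
    fix j k assume "j < n" "M \<le> k" "k < n - M" "int M < \<bar>int j - int k\<bar>"
    then show "D $$ (j,k) = 0"
      unfolding D_def M_def by (rule index_toeplitz_minus_opt_circ_trig_poly_eq_0)
  qed (use n in \<open>simp add: M_def\<close>)
  moreover have "S \<in> carrier_mat n n" using Dc by (simp add: S_def minus_carrier_mat)
  moreover have "op_norm_le S (\<delta> + \<delta> + real (2 * M + 1) * (real M * coeff_norm_sum ps / real n))"
  proof -
    have "op_norm_le (toeplitz_mat g n) \<delta>"
      using approx by (intro op_norm_le_toeplitz_mat[OF cg]) (simp add: g_def)
    moreover have "op_norm_le (band_part M D) (real (2 * M + 1) * (real M * coeff_norm_sum ps / real n))"
    proof (rule op_norm_le_band_part[OF Dc])
      fix j k assume "j < n" "k < n" "\<bar>int j - int k\<bar> \<le> int M"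
      then show "cmod (D $$ (j,k)) \<le> real M * coeff_norm_sum ps / real n"
        unfolding D_def M_def using n by (intro norm_index_toeplitz_minus_opt_circ_trig_poly)
    qed (simp add: coeff_norm_sum_nonneg)
    ultimately show ?thesis unfolding S_def using \<delta>
      by (intro op_norm_le_add[of _ n n] op_norm_le_diff[of _ n n] op_norm_le_opt_circ) (auto simp: Dc)
  qed
  ultimately show ?thesis unfolding M_def by (intro exI conjI) auto
qed

lemma toeplitz_eq_opt_circ_plus_low_rank_plus_small:
  fixes f :: "real \<Rightarrow> complex"
  assumes cont: "continuous_on UNIV f" and per: "\<And>x. f (x + 2 * pi) = f x" and \<delta>: "0 < \<delta>"
  shows "\<exists>N M. \<forall>n>N. \<exists>L S. low_rank n (2 * M) L \<and> S \<in> carrier_mat n n \<and> op_norm_le S \<delta> \<and>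
    toeplitz_mat f n = opt_circ f n + L + S"
proof -
  have "0 < \<delta> / 4" using \<delta> by simp
  from trig_poly_approx[OF cont per this]
  obtain ps where ps: "\<And>\<theta>. \<theta> \<in> {-pi..pi} \<Longrightarrow> cmod (f \<theta> - trig_poly ps \<theta>) \<le> \<delta> / 4" by blast
  define M where "M = trig_degree ps"
  define B where "B = coeff_norm_sum ps"
  define N where "N = 2 * M + nat \<lceil>2 * (2 * M + 1) * M * B / \<delta>\<rceil>"
  have small: "2 * (\<delta> / 4) + real (2 * M + 1) * (real M * B / real n) \<le> \<delta>" if n: "N < n" for n
  proof -
    have "2 * (2 * M + 1) * M * B / \<delta> \<le> real n" using n unfolding N_def by linarith
    then have "real (2 * M + 1) * (real M * B / real n) \<le> \<delta> / 2"
      using \<delta> n by (simp add: N_def field_simps)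
    then show ?thesis by linarith
  qed
  have cf: "continuous_on {-pi..pi} f" using cont by (rule continuous_on_subset) simp
  have "\<exists>L S. low_rank n (2 * M) L \<and> S \<in> carrier_mat n n \<and> op_norm_le S \<delta> \<and>
    toeplitz_mat f n = opt_circ f n + L + S" if n: "N < n" for n
  proof -
    have "2 * trig_degree ps < n" using n by (simp add: N_def M_def)
    from toeplitz_eq_opt_circ_plus_low_rank_plus_small_trig_poly[OF cf ps this]
    obtain L S where "low_rank n (2 * M) L" "S \<in> carrier_mat n n"
      "op_norm_le S (2 * (\<delta> / 4) + real (2 * M + 1) * (real M * B / real n))"
      "toeplitz_mat f n = opt_circ f n + L + S" unfolding M_def B_def by blast
    then show ?thesis using op_norm_le_mono[OF _ small[OF n]] by blast
  qed
  then show ?thesis by blast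
qed

section \<open>Perturbation of the matrix sine\<close>

definition mat_sum :: "nat \<Rightarrow> (nat \<Rightarrow> complex mat) \<Rightarrow> nat \<Rightarrow> complex mat" where
  "mat_sum n F T = mat n n (\<lambda>(i,j). \<Sum>m<T. F m $$ (i,j))"

lemma mat_sum_carrier [simp]: "mat_sum n F T \<in> carrier_mat n n"
  by (simp add: mat_sum_def)

lemma mat_sum_dim [simp]: "dim_row (mat_sum n F T) = n" "dim_col (mat_sum n F T) = n"
  by (simp_all add: mat_sum_def)

lemma index_mat_sum: "i < n \<Longrightarrow> j < n \<Longrightarrow> mat_sum n F T $$ (i,j) = (\<Sum>m<T. F m $$ (i,j))"
  by (simp add: mat_sum_def)

lemma mat_sum_0: "mat_sum n F 0 = 0\<^sub>m n n"
  by (rule eq_matI) (auto simp: index_mat_sum)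

lemma mat_sum_Suc:
  assumes "F T \<in> carrier_mat n n"
  shows "mat_sum n F (Suc T) = mat_sum n F T + F T"
  by (rule eq_matI) (use assms in \<open>auto simp: index_mat_sum\<close>)

lemma op_norm_le_mat_sum:
  assumes "\<And>m. m < T \<Longrightarrow> F m \<in> carrier_mat n n" "\<And>m. m < T \<Longrightarrow> op_norm_le (F m) (b m)"
  shows "op_norm_le (mat_sum n F T) (\<Sum>m<T. b m)"
  using assms
proof (induction T)
  case 0 then show ?case using op_norm_le_zero_mat by (simp add: mat_sum_0)
next
  case (Suc T)
  have "op_norm_le (mat_sum n F T + F T) ((\<Sum>m<T. b m) + b T)"
    by (rule op_norm_le_add[of _ n n]) (use Suc in auto)
  then show ?case using Suc.prems(1)[of T] by (simp add: mat_sum_Suc)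
qed

lemma mat_sum_perturbation:
  assumes G: "\<And>m. G m \<in> carrier_mat n n"
    and decomp: "\<And>m. m < T \<Longrightarrow> \<exists>L E. F m = G m + L + E \<and> low_rank n (k m) L \<and>
      E \<in> carrier_mat n n \<and> op_norm_le E (b m)"
  shows "\<exists>L E. mat_sum n F T = mat_sum n G T + L + E \<and> low_rank n (\<Sum>m<T. k m) L \<and>
    E \<in> carrier_mat n n \<and> op_norm_le E (\<Sum>m<T. b m)"
  using decomp
proof (induction T)
  case 0
  have "mat_sum n F 0 = mat_sum n G 0 + 0\<^sub>m n n + 0\<^sub>m n n" by (simp add: mat_sum_0)
  then show ?case using low_rank_zero_mat op_norm_le_zero_mat by fastforce
next
  case (Suc T)
  obtain L E where IH: "mat_sum n F T = mat_sum n G T + L + E" "low_rank n (\<Sum>m<T. k m) L"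
    "E \<in> carrier_mat n n" "op_norm_le E (\<Sum>m<T. b m)" using Suc by (meson less_SucI)
  obtain L' E' where T: "F T = G T + L' + E'" "low_rank n (k T) L'"
    "E' \<in> carrier_mat n n" "op_norm_le E' (b T)" using Suc.prems by blast
  have L: "L \<in> carrier_mat n n" "L' \<in> carrier_mat n n" using IH(2) T(2) by (auto dest: low_rank_carrier)
  have FT: "F T \<in> carrier_mat n n" using T(1,3) G[of T] L by simp
  have "mat_sum n F (Suc T) = (mat_sum n G T + L + E) + (G T + L' + E')"
    by (simp add: mat_sum_Suc[where F = F, OF FT] IH(1) T(1))
  also have "\<dots> = mat_sum n G (Suc T) + (L + L') + (E + E')"
    unfolding mat_sum_Suc[where F = G, OF G] using G[of T] L IH(3) T(3) by (intro eq_matI) auto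
  finally have "mat_sum n F (Suc T) = mat_sum n G (Suc T) + (L + L') + (E + E')" .
  moreover have "low_rank n (\<Sum>m<Suc T. k m) (L + L')" using low_rank_add[OF IH(2) T(2)] by simp
  moreover have "op_norm_le (E + E') (\<Sum>m<Suc T. b m)" using op_norm_le_add[OF IH(3) T(3) IH(4) T(4)] by simp
  ultimately show ?case using IH(3) T(3) by (intro exI[of _ "L + L'"] exI[of _ "E + E'"]) auto
qed

lemma power_Suc_perturbation:
  assumes X: "X \<in> carrier_mat n n" and Y: "Y \<in> carrier_mat n n" and L: "L \<in> carrier_mat n n"
    and S: "S \<in> carrier_mat n n" and Lk: "Lk \<in> carrier_mat n n" and Sk: "Sk \<in> carrier_mat n n"
    and XYLS: "X = Y + L + S" and k: "X ^\<^sub>m k = Y ^\<^sub>m k + Lk + Sk"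
  shows "X ^\<^sub>m Suc k = Y ^\<^sub>m Suc k + (Y ^\<^sub>m k * L + Lk * X) + (Y ^\<^sub>m k * S + Sk * X)"
proof -
  have Yk: "Y ^\<^sub>m k \<in> carrier_mat n n" using Y by simp
  have "X ^\<^sub>m Suc k = (Y ^\<^sub>m k + Lk) * X + Sk * X"
    unfolding pow_mat.simps k by (rule add_mult_distrib_mat[OF _ Sk X]) (use Yk Lk in simp)
  also have "(Y ^\<^sub>m k + Lk) * X = Y ^\<^sub>m k * X + Lk * X"
    by (rule add_mult_distrib_mat[OF Yk Lk X])
  also have "Y ^\<^sub>m k * X = Y ^\<^sub>m k * (Y + L) + Y ^\<^sub>m k * S"
    unfolding XYLS by (rule mult_add_distrib_mat[OF Yk _ S]) (use Y L in simp)
  also have "Y ^\<^sub>m k * (Y + L) = Y ^\<^sub>m k * Y + Y ^\<^sub>m k * L"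
    by (rule mult_add_distrib_mat[OF Yk Y L])
  finally show ?thesis
    using X Y L S Lk Sk Yk by (intro eq_matI) (simp_all add: ac_simps)
qed

lemma power_perturbation:
  assumes X: "X \<in> carrier_mat n n" and Y: "Y \<in> carrier_mat n n" and L: "low_rank n r L"
    and S: "S \<in> carrier_mat n n" and XYLS: "X = Y + L + S"
    and nS: "op_norm_le S \<eta>" and nX: "op_norm_le X K" and nY: "op_norm_le Y K" and K: "0 \<le> K" and \<eta>: "0 \<le> \<eta>"
  shows "\<exists>Lk Sk. X ^\<^sub>m k = Y ^\<^sub>m k + Lk + Sk \<and> low_rank n (k * r) Lk \<and> Sk \<in> carrier_mat n n \<and>
     op_norm_le Sk (of_nat k * K ^ (k - 1) * \<eta>)"
proof (induction k)
  case 0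
  have "X ^\<^sub>m 0 = Y ^\<^sub>m 0 + 0\<^sub>m n n + 0\<^sub>m n n" using X Y by simp
  then show ?case using low_rank_zero_mat op_norm_le_zero_mat by (intro exI[of _ "0\<^sub>m n n"]) auto
next
  case (Suc k)
  then obtain Lk Sk where IH: "X ^\<^sub>m k = Y ^\<^sub>m k + Lk + Sk" "low_rank n (k * r) Lk"
    "Sk \<in> carrier_mat n n" "op_norm_le Sk (of_nat k * K ^ (k - 1) * \<eta>)" by blast
  have Yk: "Y ^\<^sub>m k \<in> carrier_mat n n" using Y by simp
  have "low_rank n (r + k * r) (Y ^\<^sub>m k * L + Lk * X)"
    by (intro low_rank_add low_rank_mult_left low_rank_mult_right Yk X L IH(2))
  moreover have "op_norm_le (Y ^\<^sub>m k * S + Sk * X) (K ^ k * \<eta> + of_nat k * K ^ (k - 1) * \<eta> * K)"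
    using op_norm_le_power[OF Y nY K, of k] Yk S X IH(3) K \<eta>
    by (intro op_norm_le_add[of _ n n] op_norm_le_mult[OF Yk S] op_norm_le_mult[OF IH(3) X] nS nX IH(4)) auto
  moreover have "K ^ k * \<eta> + of_nat k * K ^ (k - 1) * \<eta> * K = of_nat (Suc k) * K ^ (Suc k - 1) * \<eta>"
    by (cases k) (simp_all add: algebra_simps)
  ultimately show ?case
    using power_Suc_perturbation[OF X Y low_rank_carrier[OF L] S low_rank_carrier[OF IH(2)] IH(3) XYLS IH(1)]
      Yk S IH(3) X by (intro exI conjI) (auto simp: add.commute)
qed

definition sin_coeff :: "nat \<Rightarrow> complex" where
  "sin_coeff m = (-1) ^ m / of_nat (fact (2 * m + 1))"

definition sin_term :: "complex mat \<Rightarrow> nat \<Rightarrow> complex mat" where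
  "sin_term X m = sin_coeff m \<cdot>\<^sub>m (X ^\<^sub>m (2 * m + 1))"

definition sin_majorant :: "real \<Rightarrow> nat \<Rightarrow> real" where
  "sin_majorant K m = K ^ (2 * m + 1) / fact (2 * m + 1)"

definition sin_majorant_tail :: "real \<Rightarrow> nat \<Rightarrow> real" where
  "sin_majorant_tail K T = (\<Sum>m. sin_majorant K (m + T))"

lemma norm_sin_coeff: "cmod (sin_coeff m) = 1 / fact (2 * m + 1)"
proof -
  have "cmod (of_nat (fact (2 * m + 1)) :: complex) = fact (2 * m + 1)" by (metis of_nat_fact norm_of_nat)
  moreover have "cmod ((-1) ^ m :: complex) = 1" by (simp add: norm_power)
  ultimately show ?thesis unfolding sin_coeff_def norm_divide by simp
qed

lemma sin_majorant_nonneg: "0 \<le> K \<Longrightarrow> 0 \<le> sin_majorant K m"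
  by (simp add: sin_majorant_def)

lemma summable_sin_majorant: assumes K: "0 \<le> K" shows "summable (sin_majorant K)"
proof (rule summable_comparison_test')
  show "summable (\<lambda>m. K * (inverse (fact m) * (K\<^sup>2) ^ m))"
    by (intro summable_mult summable_exp)
  fix m :: nat
  have f: "(fact m :: real) \<le> fact (2 * m + 1)" by (rule fact_mono) simp
  have "norm (sin_majorant K m) = K * (K\<^sup>2) ^ m / fact (2 * m + 1)"
  proof -
    have "K ^ (2 * m + 1) = K * (K\<^sup>2) ^ m" by (simp add: power_mult[symmetric])
    then show ?thesis using K by (simp add: sin_majorant_def)
  qed
  also have "\<dots> \<le> K * (K\<^sup>2) ^ m / fact m"
    by (rule divide_left_mono) (use K f in auto)
  also have "\<dots> = K * (inverse (fact m) * (K\<^sup>2) ^ m)" by (simp add: field_simps)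
  finally show "norm (sin_majorant K m) \<le> K * (inverse (fact m) * (K\<^sup>2) ^ m)" .
qed

lemma sin_majorant_tail_nonneg: "0 \<le> K \<Longrightarrow> 0 \<le> sin_majorant_tail K T"
  unfolding sin_majorant_tail_def by (intro suminf_nonneg summable_ignore_initial_segment summable_sin_majorant sin_majorant_nonneg)

lemma op_norm_le_sin_term:
  assumes X: "X \<in> carrier_mat n n" "op_norm_le X K" "0 \<le> K"
  shows "op_norm_le (sin_term X m) (sin_majorant K m)"
proof -
  have "op_norm_le (sin_term X m) (cmod (sin_coeff m) * K ^ (2 * m + 1))"
    unfolding sin_term_def by (rule op_norm_le_smult[OF op_norm_le_power[OF X(1) X(2) X(3)]])
  then show ?thesis by (simp add: norm_sin_coeff sin_majorant_def)
qed

lemma sin_term_carrier [simp]: "X \<in> carrier_mat n n \<Longrightarrow> sin_term X m \<in> carrier_mat n n"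
  unfolding sin_term_def by (rule smult_carrier_mat[OF pow_carrier_mat])

lemma norm_index_sin_term_le:
  assumes X: "X \<in> carrier_mat n n" "op_norm_le X K" "0 \<le> K" "i < n" "j < n"
  shows "cmod (sin_term X m $$ (i,j)) \<le> sin_majorant K m"
  by (rule norm_index_le_op_norm[OF sin_term_carrier[OF X(1)] op_norm_le_sin_term[OF X(1-3)] X(4,5)])

lemma summable_norm_index_sin_term:
  assumes X: "X \<in> carrier_mat n n" "op_norm_le X K" "0 \<le> K" "i < n" "j < n"
  shows "summable (\<lambda>m. cmod (sin_term X m $$ (i,j)))"
  by (rule summable_comparison_test'[OF summable_sin_majorant[OF X(3)]]) (use norm_index_sin_term_le[OF X] in simp)

lemma index_mat_sin: assumes X: "X \<in> carrier_mat n n" "i < n" "j < n"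
  shows "mat_sin X $$ (i,j) = (\<Sum>m. sin_term X m $$ (i,j))"
  using X by (simp add: mat_sin_def sin_term_def sin_coeff_def)

lemma mat_sin_dim [simp]: "dim_row (mat_sin X) = dim_row X" "dim_col (mat_sin X) = dim_col X"
  by (simp_all add: mat_sin_def)

lemma mat_sin_carrier [simp]: "X \<in> carrier_mat n n \<Longrightarrow> mat_sin X \<in> carrier_mat n n"
  by (simp add: mat_sin_def)

definition sin_tail :: "nat \<Rightarrow> complex mat \<Rightarrow> nat \<Rightarrow> complex mat" where
  "sin_tail n X T = mat n n (\<lambda>(i,j). \<Sum>m. sin_term X (m + T) $$ (i,j))"

lemma sin_tail_carrier [simp]: "sin_tail n X T \<in> carrier_mat n n"
  by (simp add: sin_tail_def)

lemma sin_tail_dim [simp]: "dim_row (sin_tail n X T) = n" "dim_col (sin_tail n X T) = n"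
  by (simp_all add: sin_tail_def)

lemma mat_sin_split: assumes X: "X \<in> carrier_mat n n" "op_norm_le X K" "0 \<le> K"
  shows "mat_sin X = mat_sum n (sin_term X) T + sin_tail n X T"
proof (rule eq_matI)
  fix i j assume "i < dim_row (mat_sum n (sin_term X) T + sin_tail n X T)" "j < dim_col (mat_sum n (sin_term X) T + sin_tail n X T)"
  then have i: "i < n" and j: "j < n" by auto
  have s: "summable (\<lambda>m. sin_term X m $$ (i,j))"
    by (rule summable_norm_cancel[OF summable_norm_index_sin_term[OF X i j]])
  show "mat_sin X $$ (i,j) = (mat_sum n (sin_term X) T + sin_tail n X T) $$ (i,j)"
    using suminf_split_initial_segment[OF s, of T] i j X
    by (simp add: index_mat_sin index_mat_sum sin_tail_def)
qed (use X in auto)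

lemma sin_tail_split:
  assumes X: "X \<in> carrier_mat n n" "op_norm_le X K" "0 \<le> K" and T: "T \<le> T'"
  shows "sin_tail n X T = mat_sum n (\<lambda>m. sin_term X (m + T)) (T' - T) + sin_tail n X T'"
proof (rule eq_matI)
  fix i j assume "i < dim_row (mat_sum n (\<lambda>m. sin_term X (m + T)) (T' - T) + sin_tail n X T')"
    "j < dim_col (mat_sum n (\<lambda>m. sin_term X (m + T)) (T' - T) + sin_tail n X T')"
  then have i: "i < n" and j: "j < n" by auto
  have s: "summable (\<lambda>m. sin_term X (m + T) $$ (i,j))"
    by (rule summable_ignore_initial_segment[OF summable_norm_cancel[OF summable_norm_index_sin_term[OF X i j]]])
  have e: "(\<Sum>m. sin_term X (m + (T' - T) + T) $$ (i,j)) = (\<Sum>m. sin_term X (m + T') $$ (i,j))"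
    using T by (simp add: add.assoc)
  show "sin_tail n X T $$ (i,j) = (mat_sum n (\<lambda>m. sin_term X (m + T)) (T' - T) + sin_tail n X T') $$ (i,j)"
    using suminf_split_initial_segment[OF s, of "T' - T"] i j e
    by (simp add: index_mat_sum sin_tail_def)
qed (use X in auto)

lemma norm_index_sin_tail_le:
  assumes X: "X \<in> carrier_mat n n" "op_norm_le X K" "0 \<le> K" and ij: "i < n" "j < n"
  shows "cmod (sin_tail n X T $$ (i,j)) \<le> sin_majorant_tail K T"
proof -
  have s: "summable (\<lambda>m. cmod (sin_term X (m + T) $$ (i,j)))"
    by (rule summable_ignore_initial_segment[OF summable_norm_index_sin_term[OF X ij]])
  have "cmod (sin_tail n X T $$ (i,j)) \<le> (\<Sum>m. cmod (sin_term X (m + T) $$ (i,j)))"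
    using ij summable_norm[OF s] by (simp add: sin_tail_def)
  also have "\<dots> \<le> (\<Sum>m. sin_majorant K (m + T))"
    by (rule suminf_le[OF _ s summable_ignore_initial_segment[OF summable_sin_majorant[OF X(3)]]])
      (rule norm_index_sin_term_le[OF X ij])
  finally show ?thesis unfolding sin_majorant_tail_def .
qed

text \<open>The tail from \<open>T\<close> on is a finite block of terms, bounded termwise, plus a far tail whose
  entries are so small that even the crude entrywise bound makes it negligible.\<close>

lemma op_norm_le_sin_tail:
  assumes X: "X \<in> carrier_mat n n" "op_norm_le X K" "0 \<le> K"
  shows "op_norm_le (sin_tail n X T) (sin_majorant_tail K T)"
proof (rule op_norm_le_approx)
  fix d :: real assume d: "0 < d"
  have sb: "summable (sin_majorant K)" by (rule summable_sin_majorant[OF X(3)])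
  have "0 < d / (real n * real n + 1)" using d by (simp add: add_nonneg_pos)
  from suminf_exist_split[OF this sb] obtain N
    where N: "\<And>T'. N \<le> T' \<Longrightarrow> norm (\<Sum>i. sin_majorant K (i + T')) < d / (real n * real n + 1)"
    by blast
  define T' where "T' = max N T"
  have T': "T \<le> T'" "sin_majorant_tail K T' \<le> d / (real n * real n + 1)"
    using N[of T'] sin_majorant_tail_nonneg[OF X(3), of T'] by (auto simp: T'_def sin_majorant_tail_def)
  have head: "op_norm_le (mat_sum n (\<lambda>m. sin_term X (m + T)) (T' - T)) (\<Sum>m<T' - T. sin_majorant K (m + T))"
    by (rule op_norm_le_mat_sum) (use op_norm_le_sin_term[OF X] X in auto)
  have head_le: "(\<Sum>m<T' - T. sin_majorant K (m + T)) \<le> sin_majorant_tail K T"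
    unfolding sin_majorant_tail_def
    by (rule sum_le_suminf[OF summable_ignore_initial_segment[OF sb]]) (auto intro: sin_majorant_nonneg X(3))
  have far: "op_norm_le (sin_tail n X T') d"
  proof (rule op_norm_le_mono[OF op_norm_le_sum_norm_entries[OF sin_tail_carrier]])
    have "(\<Sum>i<n. \<Sum>j<n. cmod (sin_tail n X T' $$ (i,j))) \<le> (\<Sum>i<n. \<Sum>j<n. d / (real n * real n + 1))"
      by (intro sum_mono order_trans[OF norm_index_sin_tail_le[OF X] T'(2)]) auto
    also have "\<dots> = real n * real n * (d / (real n * real n + 1))" by simp
    also have "\<dots> = d * (real n * real n / (real n * real n + 1))" by simp
    also have "\<dots> \<le> d"
      using d by (intro mult_left_le) (auto simp: divide_le_eq add_nonneg_pos)
    finally show "(\<Sum>i<n. \<Sum>j<n. cmod (sin_tail n X T' $$ (i,j))) \<le> d" .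
  qed
  have "op_norm_le (sin_tail n X T) ((\<Sum>m<T' - T. sin_majorant K (m + T)) + d)"
    unfolding sin_tail_split[OF X T'(1)] by (rule op_norm_le_add[OF mat_sum_carrier sin_tail_carrier head far])
  then show "op_norm_le (sin_tail n X T) (sin_majorant_tail K T + d)"
    by (rule op_norm_le_mono) (use head_le in simp)
qed

definition sin_partial_lipschitz :: "real \<Rightarrow> nat \<Rightarrow> real" where
  "sin_partial_lipschitz K T = (\<Sum>m<T. of_nat (2 * m + 1) * K ^ (2 * m) / fact (2 * m + 1))"

lemma sin_partial_lipschitz_nonneg: "0 \<le> K \<Longrightarrow> 0 \<le> sin_partial_lipschitz K T"
  unfolding sin_partial_lipschitz_def by (intro sum_nonneg) auto

lemma sum_odd_eq_square: "(\<Sum>m<T. 2 * m + 1) = T * (T :: nat)"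
  by (induction T) auto

lemma sin_term_perturbation:
  assumes X: "X \<in> carrier_mat n n" and Y: "Y \<in> carrier_mat n n" and L: "low_rank n r L"
    and S: "S \<in> carrier_mat n n" and XYLS: "X = Y + L + S"
    and nS: "op_norm_le S \<eta>" and nX: "op_norm_le X K" and nY: "op_norm_le Y K" and K: "0 \<le> K" and \<eta>: "0 \<le> \<eta>"
  shows "\<exists>L' E'. sin_term X m = sin_term Y m + L' + E' \<and> low_rank n ((2 * m + 1) * r) L' \<and>
    E' \<in> carrier_mat n n \<and> op_norm_le E' (of_nat (2 * m + 1) * K ^ (2 * m) / fact (2 * m + 1) * \<eta>)"
proof -
  obtain Lk Sk where P: "X ^\<^sub>m (2 * m + 1) = Y ^\<^sub>m (2 * m + 1) + Lk + Sk" "low_rank n ((2 * m + 1) * r) Lk"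
    "Sk \<in> carrier_mat n n" "op_norm_le Sk (of_nat (2 * m + 1) * K ^ (2 * m) * \<eta>)"
    using power_perturbation[OF X Y L S XYLS nS nX nY K \<eta>, of "2 * m + 1"] by auto
  have "sin_term X m = sin_term Y m + sin_coeff m \<cdot>\<^sub>m Lk + sin_coeff m \<cdot>\<^sub>m Sk"
    unfolding sin_term_def P(1) using Y P(3) low_rank_carrier[OF P(2)]
    by (intro eq_matI) (auto simp: algebra_simps)
  moreover have "cmod (sin_coeff m) * (of_nat (2 * m + 1) * K ^ (2 * m) * \<eta>)
      = of_nat (2 * m + 1) * K ^ (2 * m) / fact (2 * m + 1) * \<eta>"
    by (simp add: norm_sin_coeff)
  then have "op_norm_le (sin_coeff m \<cdot>\<^sub>m Sk) (of_nat (2 * m + 1) * K ^ (2 * m) / fact (2 * m + 1) * \<eta>)"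
    using op_norm_le_smult[OF P(4), of "sin_coeff m"] by simp
  ultimately show ?thesis using low_rank_smult[OF P(2)] P(3)
    by (intro exI[of _ "sin_coeff m \<cdot>\<^sub>m Lk"] exI[of _ "sin_coeff m \<cdot>\<^sub>m Sk"] conjI) auto
qed

lemma mat_sin_perturbation:
  assumes X: "X \<in> carrier_mat n n" and Y: "Y \<in> carrier_mat n n" and L: "low_rank n r L"
    and S: "S \<in> carrier_mat n n" and XYLS: "X = Y + L + S"
    and nS: "op_norm_le S \<eta>" and nX: "op_norm_le X K" and nY: "op_norm_le Y K" and K: "0 \<le> K" and \<eta>: "0 \<le> \<eta>"
  shows "\<exists>R E. mat_sin X = mat_sin Y + R + E \<and> low_rank n (T * T * r) R \<and> E \<in> carrier_mat n n \<and>
     op_norm_le E (\<eta> * sin_partial_lipschitz K T + 2 * sin_majorant_tail K T)"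
proof -
  have "\<exists>R E. mat_sum n (sin_term X) T = mat_sum n (sin_term Y) T + R + E \<and>
    low_rank n (\<Sum>m<T. (2 * m + 1) * r) R \<and> E \<in> carrier_mat n n \<and>
    op_norm_le E (\<Sum>m<T. of_nat (2 * m + 1) * K ^ (2 * m) / fact (2 * m + 1) * \<eta>)"
    by (rule mat_sum_perturbation) (use Y sin_term_perturbation[OF X Y L S XYLS nS nX nY K \<eta>] in auto)
  then obtain R E where RE: "mat_sum n (sin_term X) T = mat_sum n (sin_term Y) T + R + E"
    "low_rank n (\<Sum>m<T. (2 * m + 1) * r) R" "E \<in> carrier_mat n n"
    "op_norm_le E (\<Sum>m<T. of_nat (2 * m + 1) * K ^ (2 * m) / fact (2 * m + 1) * \<eta>)"
    by blast
  define E' where "E' = E + (sin_tail n X T - sin_tail n Y T)"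
  have "mat_sin X = mat_sin Y + R + E'"
    using low_rank_carrier[OF RE(2)] RE(3) Y
    by (intro eq_matI) (auto simp: mat_sin_split[OF X nX K, of T] mat_sin_split[OF Y nY K, of T] RE(1) E'_def)
  moreover have "(\<Sum>m<T. (2 * m + 1) * r) = T * T * r"
    unfolding sum_distrib_right[symmetric] sum_odd_eq_square ..
  moreover have "op_norm_le E' (\<eta> * sin_partial_lipschitz K T + (sin_majorant_tail K T + sin_majorant_tail K T))"
    using RE(4) unfolding E'_def
    by (intro op_norm_le_add[of _ n n] op_norm_le_diff[of _ n n] op_norm_le_sin_tail X Y nX nY K RE(3))
      (simp_all add: sin_partial_lipschitz_def sum_distrib_left mult.commute minus_carrier_mat)
  ultimately show ?thesis
    using RE(2,3) by (intro exI conjI) (auto simp: E'_def minus_carrier_mat)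
qed

lemma mat_sin_toeplitz_eq_mat_sin_opt_circ_plus_low_rank_plus_small:
  fixes f :: "real \<Rightarrow> complex"
  assumes cont: "continuous_on UNIV f" and per: "\<And>x. f (x + 2 * pi) = f x" and \<epsilon>: "0 < \<epsilon>"
  shows "\<exists>N r. \<forall>n>N. \<exists>R E. mat_sin (toeplitz_mat f n) = mat_sin (opt_circ f n) + R + E \<and>
    low_rank n r R \<and> E \<in> carrier_mat n n \<and> op_norm_le E \<epsilon>"
proof -
  have cf: "continuous_on {-pi..pi} f" using cont by (rule continuous_on_subset) simp
  obtain K where K: "0 < K" "\<And>\<theta>. \<theta> \<in> {-pi..pi} \<Longrightarrow> cmod (f \<theta>) \<le> K"
    using compact_imp_bounded[OF compact_continuous_image[OF cf compact_Icc]] by (auto simp: bounded_pos)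
  have nA: "op_norm_le (toeplitz_mat f n) K" for n by (rule op_norm_le_toeplitz_mat[OF cf K(2)])
  have nC: "op_norm_le (opt_circ f n) K" for n using K(1) by (intro op_norm_le_opt_circ nA) simp
  obtain T where "norm (\<Sum>i. sin_majorant K (i + T)) < \<epsilon> / 4"
    using suminf_exist_split[OF _ summable_sin_majorant, of "\<epsilon> / 4" K] \<epsilon> K(1) by auto
  then have tail: "2 * sin_majorant_tail K T \<le> \<epsilon> / 2"
    using sin_majorant_tail_nonneg[of K T] K(1) by (simp add: sin_majorant_tail_def)
  define \<Gamma> where "\<Gamma> = sin_partial_lipschitz K T"
  have \<Gamma>: "0 \<le> \<Gamma>" using K(1) by (simp add: \<Gamma>_def sin_partial_lipschitz_nonneg)
  define \<eta> where "\<eta> = \<epsilon> / (2 * (\<Gamma> + 1))"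
  have \<eta>: "0 < \<eta>" "\<eta> * \<Gamma> \<le> \<epsilon> / 2" using \<epsilon> \<Gamma> by (auto simp: \<eta>_def field_simps)
  obtain N M where NM: "\<And>n. N < n \<Longrightarrow> \<exists>L S. low_rank n (2 * M) L \<and> S \<in> carrier_mat n n \<and>
      op_norm_le S \<eta> \<and> toeplitz_mat f n = opt_circ f n + L + S"
    using toeplitz_eq_opt_circ_plus_low_rank_plus_small[OF cont per \<eta>(1)] by blast
  have "\<exists>R E. mat_sin (toeplitz_mat f n) = mat_sin (opt_circ f n) + R + E \<and>
    low_rank n (T * T * (2 * M)) R \<and> E \<in> carrier_mat n n \<and> op_norm_le E \<epsilon>" if n: "N < n" for n
  proof -
    obtain L S where "low_rank n (2 * M) L" "S \<in> carrier_mat n n" "op_norm_le S \<eta>"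
      "toeplitz_mat f n = opt_circ f n + L + S" using NM[OF n] by blast
    from mat_sin_perturbation[OF toeplitz_mat_carrier opt_circ_carrier this(1,2,4,3) nA nC, of T]
    obtain R E where "mat_sin (toeplitz_mat f n) = mat_sin (opt_circ f n) + R + E"
      "low_rank n (T * T * (2 * M)) R" "E \<in> carrier_mat n n"
      "op_norm_le E (\<eta> * \<Gamma> + 2 * sin_majorant_tail K T)"
      using K(1) \<eta>(1) unfolding \<Gamma>_def by auto
    moreover have "\<eta> * \<Gamma> + 2 * sin_majorant_tail K T \<le> \<epsilon>" using \<eta>(2) tail by linarith
    ultimately show ?thesis by (blast intro: op_norm_le_mono)
  qed
  then show ?thesis by blast
qed

lemma mat_inv_left_inverse:
  assumes "invertible_mat A" "A \<in> carrier_mat n n"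
  shows "mat_inv A \<in> carrier_mat n n" "mat_inv A * A = 1\<^sub>m n"
proof -
  obtain B where AB: "inverts_mat A B" "inverts_mat B A" using assms(1) unfolding invertible_mat_def by blast
  have "dim_col B = n" "dim_row B = n"
    using arg_cong[OF AB(1)[unfolded inverts_mat_def], of dim_col]
      arg_cong[OF AB(2)[unfolded inverts_mat_def], of dim_col] assms(2) by auto
  then have "B \<in> carrier_mat n n" by auto
  then have "\<exists>B. B \<in> carrier_mat (dim_row A) (dim_row A) \<and> A * B = 1\<^sub>m (dim_row A) \<and> B * A = 1\<^sub>m (dim_row A)"
    using AB assms(2) unfolding inverts_mat_def by auto
  from someI_ex[OF this] show "mat_inv A \<in> carrier_mat n n" "mat_inv A * A = 1\<^sub>m n"
    using assms(2) unfolding mat_inv_def by auto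
qed

lemma mult_mat_inv_perturbation:
  assumes Y: "invertible_mat Y" "Y \<in> carrier_mat n n" "spec_norm (mat_inv Y) \<le> C"
    and X: "X = Y + R + E" "low_rank n r R" "E \<in> carrier_mat n n" "op_norm_le E \<eta>" "0 \<le> \<eta>"
  shows "\<exists>R' E'. R' \<in> carrier_mat n n \<and> E' \<in> carrier_mat n n \<and> mat_inv Y * X = 1\<^sub>m n + R' + E' \<and>
    cmat_rank R' \<le> r \<and> spec_norm E' \<le> C * \<eta>"
proof -
  define W where "W = mat_inv Y"
  have W: "W \<in> carrier_mat n n" "W * Y = 1\<^sub>m n" "op_norm_le W C" "0 \<le> C"
    using mat_inv_left_inverse[OF Y(1,2)] op_norm_le_mono[OF op_norm_le_spec_norm Y(3)]
      order_trans[OF spec_norm_nonneg Y(3)] by (auto simp: W_def)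
  have R: "R \<in> carrier_mat n n" using low_rank_carrier[OF X(2)] .
  have "W * X = W * (Y + R) + W * E"
    unfolding X(1) by (rule mult_add_distrib_mat[OF W(1) _ X(3)]) (use Y(2) R in simp)
  also have "W * (Y + R) = 1\<^sub>m n + W * R" using mult_add_distrib_mat[OF W(1) Y(2) R] W(2) by simp
  finally have "W * X = 1\<^sub>m n + W * R + W * E" .
  moreover have "spec_norm (W * E) \<le> C * \<eta>"
    by (rule spec_norm_le[OF op_norm_le_mult[OF W(1) X(3) W(3) X(4) W(4)]]) (use W(4) X(5) in simp)
  moreover have "W * R \<in> carrier_mat n n" "W * E \<in> carrier_mat n n" using W(1) R X(3) by simp_all
  ultimately show ?thesis
    using cmat_rank_le_if_low_rank[OF low_rank_mult_left[OF W(1) X(2)]] unfolding W_def[symmetric]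
    by (intro exI[of _ "W * R"] exI[of _ "W * E"] conjI)
qed

theorem mainTheorem6:
  fixes f :: "real \<Rightarrow> complex" and C :: real
  assumes cont: "continuous_on UNIV f"
    and per: "\<And>x. f (x + 2 * pi) = f x"
    and inv: "\<And>n. invertible_mat (mat_sin (opt_circ f n))"
    and bnd: "\<And>n. spec_norm (mat_inv (mat_sin (opt_circ f n))) \<le> C"
  shows "\<forall>\<epsilon>>0. \<exists>N M :: nat. N > 0 \<and> M > 0 \<and>
           (\<forall>n>N. \<exists>R E. R \<in> carrier_mat n n \<and> E \<in> carrier_mat n n \<and>
              mat_inv (mat_sin (opt_circ f n)) * mat_sin (toeplitz_mat f n) = 1\<^sub>m n + R + E \<and>
              cmat_rank R \<le> 2 * M \<and> spec_norm E \<le> \<epsilon>)"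
proof (intro allI impI)
  fix \<epsilon> :: real assume "\<epsilon> > 0"
  have C: "0 \<le> C" using spec_norm_nonneg bnd[of 0] by (rule order_trans)
  then obtain N r where Nr: "\<And>n. N < n \<Longrightarrow> \<exists>R E. mat_sin (toeplitz_mat f n) = mat_sin (opt_circ f n) + R + E \<and>
      low_rank n r R \<and> E \<in> carrier_mat n n \<and> op_norm_le E (\<epsilon> / (C + 1))"
    using mat_sin_toeplitz_eq_mat_sin_opt_circ_plus_low_rank_plus_small[OF cont per, of "\<epsilon> / (C + 1)"]
      \<open>\<epsilon> > 0\<close> by auto
  have "\<exists>R E. R \<in> carrier_mat n n \<and> E \<in> carrier_mat n n \<and>
      mat_inv (mat_sin (opt_circ f n)) * mat_sin (toeplitz_mat f n) = 1\<^sub>m n + R + E \<and>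
      cmat_rank R \<le> 2 * Suc r \<and> spec_norm E \<le> \<epsilon>" if n: "N < n" for n
  proof -
    obtain R E where "mat_sin (toeplitz_mat f n) = mat_sin (opt_circ f n) + R + E"
      "low_rank n r R" "E \<in> carrier_mat n n" "op_norm_le E (\<epsilon> / (C + 1))" using Nr[OF n] by blast
    from mult_mat_inv_perturbation[OF inv mat_sin_carrier[OF opt_circ_carrier] bnd this]
    obtain R' E' where "R' \<in> carrier_mat n n" "E' \<in> carrier_mat n n" "cmat_rank R' \<le> r"
      "mat_inv (mat_sin (opt_circ f n)) * mat_sin (toeplitz_mat f n) = 1\<^sub>m n + R' + E'"
      "spec_norm E' \<le> C * (\<epsilon> / (C + 1))" using \<open>\<epsilon> > 0\<close> C by auto
    moreover have "C * (\<epsilon> / (C + 1)) \<le> \<epsilon>" using \<open>\<epsilon> > 0\<close> C by (simp add: field_simps)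
    ultimately show ?thesis by (intro exI[of _ R'] exI[of _ E']) auto
  qed
  then show "\<exists>N M :: nat. N > 0 \<and> M > 0 \<and> (\<forall>n>N. \<exists>R E. R \<in> carrier_mat n n \<and> E \<in> carrier_mat n n \<and>
      mat_inv (mat_sin (opt_circ f n)) * mat_sin (toeplitz_mat f n) = 1\<^sub>m n + R + E \<and>
      cmat_rank R \<le> 2 * M \<and> spec_norm E \<le> \<epsilon>)"
    by (intro exI[of _ "Suc N"] exI[of _ "Suc r"]) auto
qed

end
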